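(* Let $X$ be a strictly $k$-affinoid space, let $\underline r=(r_1,\dots,r_n)$ be a polyradius with $r_i>1$ and $r_i\in\sqrt{|k^\times|}$ for all $i$, and let $S\subseteq X\times\mathbb B_{\underline r}$ be an overconvergent subanalytic subset of $X\times\mathbb B_{\underline r}$. Then $\pi(S\cap(X\times\mathbb B^n))$ is an overconvergent subanalytic subset of $X$, where $\pi:X\times\mathbb B_{\underline r}\to X$ is the projection.
   Context: $k$ is a complete non-archimedean field with non-trivial absolute value; spaces are Berkovich spaces. $\mathbb B_{\underline r}=\mathcal M(k\{r_1^{-1}T_1,\dots,r_n^{-1}T_n\})$, $\mathbb B^n_r$ the polydisc of polyradius $(r,\dots,r)$, $\mathbb B^n=\mathbb B^n_1$. A subset of a $k$-affinoid space $X=\mathcal M(\mathcal A)$ is semianalytic if it is a finite Boolean combination of sets $\{x\in X:|f(x)|\le|g(x)|\}$, $f,g\in\mathcal A$. A subset $S$ of a strictly $k$-affinoid space $Z$ is overconvergent subanalytic if there exist $m\in\mathbb N$, a real $s>1$ and a semianalytic $T\subseteq Z\times\mathbb B^m_s$ with $S=p(T\cap(Z\times\mathbb B^m))$, $p$ the projection to $Z$. *)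

theory Defs
  imports Complex_Main
begin

definition nonarch_abs :: "('k::field \<Rightarrow> real) \<Rightarrow> bool" where
  "nonarch_abs absv \<longleftrightarrow>
     (\<forall>x. 0 \<le> absv x) \<and> (\<forall>x. absv x = 0 \<longleftrightarrow> x = 0) \<and>
     (\<forall>x y. absv (x * y) = absv x * absv y) \<and>
     (\<forall>x y. absv (x + y) \<le> max (absv x) (absv y))"

definition complete_abs :: "('k::field \<Rightarrow> real) \<Rightarrow> bool" where
  "complete_abs absv \<longleftrightarrow>
     (\<forall>u::nat \<Rightarrow> 'k. (\<forall>e>0. \<exists>N. \<forall>p\<ge>N. \<forall>q\<ge>N. absv (u p - u q) < e) \<longrightarrow>
        (\<exists>l. \<forall>e>0. \<exists>N. \<forall>p\<ge>N. absv (u p - l) < e))"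

definition nontrivial_abs :: "('k::field \<Rightarrow> real) \<Rightarrow> bool" where
  "nontrivial_abs absv \<longleftrightarrow> (\<exists>c. absv c \<noteq> 0 \<and> absv c \<noteq> 1)"

definition valued_field :: "('k::field \<Rightarrow> real) \<Rightarrow> bool" where
  "valued_field absv \<longleftrightarrow> nonarch_abs absv \<and> complete_abs absv \<and> nontrivial_abs absv"

text \<open>r lies in the divisible hull sqrt(|k^x|) of the value group.\<close>
definition in_sqrt_value_group :: "('k::field \<Rightarrow> real) \<Rightarrow> real \<Rightarrow> bool" where
  "in_sqrt_value_group absv r \<longleftrightarrow> (\<exists>c m. c \<noteq> 0 \<and> m > (0::nat) \<and> r ^ m = absv c)"

text \<open>Power series in the variables T_i (i a natural number) are coefficient functions
  on multi-indices (finitely supported maps nat to nat).\<close>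

type_synonym 'k series = "(nat \<Rightarrow> nat) \<Rightarrow> 'k"

definition multi_indices :: "nat set \<Rightarrow> (nat \<Rightarrow> nat) set" where
  "multi_indices V = {\<nu>. finite {i. \<nu> i \<noteq> 0} \<and> {i. \<nu> i \<noteq> 0} \<subseteq> V}"

definition mono_rad :: "(nat \<Rightarrow> real) \<Rightarrow> (nat \<Rightarrow> nat) \<Rightarrow> real" where
  "mono_rad \<rho> \<nu> = (\<Prod>i\<in>{i. \<nu> i \<noteq> 0}. \<rho> i ^ \<nu> i)"

text \<open>k{rho^-1 T_V}: series in the variables indexed by V with |a_nu| rho^nu \<rightarrow> 0.\<close>
definition tate :: "('k::field \<Rightarrow> real) \<Rightarrow> (nat \<Rightarrow> real) \<Rightarrow> nat set \<Rightarrow> 'k series set" where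
  "tate absv \<rho> V = {a. (\<forall>\<nu>. \<nu> \<notin> multi_indices V \<longrightarrow> a \<nu> = 0) \<and>
                      (\<forall>e>0. finite {\<nu>. e \<le> absv (a \<nu>) * mono_rad \<rho> \<nu>})}"

definition gauss :: "('k::field \<Rightarrow> real) \<Rightarrow> (nat \<Rightarrow> real) \<Rightarrow> 'k series \<Rightarrow> real" where
  "gauss absv \<rho> a = Sup (range (\<lambda>\<nu>. absv (a \<nu>) * mono_rad \<rho> \<nu>))"

definition ser_zero :: "'k::field series" where "ser_zero = (\<lambda>_. 0)"

definition ser_one :: "'k::field series" where
  "ser_one = (\<lambda>\<nu>. if \<nu> = (\<lambda>_. 0) then 1 else 0)"

definition ser_var :: "nat \<Rightarrow> 'k::field series" where
  "ser_var j = (\<lambda>\<nu>. if \<nu> = (\<lambda>i. if i = j then 1 else 0) then 1 else 0)"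

definition ser_add :: "'k::field series \<Rightarrow> 'k series \<Rightarrow> 'k series" where
  "ser_add a b = (\<lambda>\<nu>. a \<nu> + b \<nu>)"

definition ser_mul :: "'k::field series \<Rightarrow> 'k series \<Rightarrow> 'k series" where
  "ser_mul a b = (\<lambda>\<nu>. \<Sum>\<alpha>\<in>{\<alpha>. \<forall>i. \<alpha> i \<le> \<nu> i}. a \<alpha> * b (\<lambda>i. \<nu> i - \<alpha> i))"

definition is_ideal :: "'k::field series set \<Rightarrow> 'k series set \<Rightarrow> bool" where
  "is_ideal A I \<longleftrightarrow> I \<subseteq> A \<and> ser_zero \<in> I \<and>
     (\<forall>f\<in>I. \<forall>g\<in>I. ser_add f g \<in> I) \<and> (\<forall>f\<in>A. \<forall>g\<in>I. ser_mul f g \<in> I)"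

text \<open>Points of M(k{rho^-1 T_V}/I): bounded multiplicative seminorms on the Tate algebra
  vanishing on I (equivalently, on the quotient). Outside the algebra a point is 0.\<close>
definition spec :: "('k::field \<Rightarrow> real) \<Rightarrow> (nat \<Rightarrow> real) \<Rightarrow> nat set \<Rightarrow> 'k series set
                     \<Rightarrow> ('k series \<Rightarrow> real) set" where
  "spec absv \<rho> V I = {x.
     (\<forall>f. f \<notin> tate absv \<rho> V \<longrightarrow> x f = 0) \<and>
     x ser_zero = 0 \<and> x ser_one = 1 \<and>
     (\<forall>f\<in>tate absv \<rho> V. 0 \<le> x f) \<and>
     (\<forall>f\<in>tate absv \<rho> V. \<forall>g\<in>tate absv \<rho> V.
         x (ser_add f g) \<le> x f + x g \<and> x (ser_mul f g) = x f * x g) \<and>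
     (\<exists>C. \<forall>f\<in>tate absv \<rho> V. x f \<le> C * gauss absv \<rho> f) \<and>
     (\<forall>f\<in>I. x f = 0)}"

text \<open>Restriction of a point to the subalgebra in the variables < N (the projection).\<close>
definition restr :: "('k::field \<Rightarrow> real) \<Rightarrow> (nat \<Rightarrow> real) \<Rightarrow> nat
                     \<Rightarrow> ('k series \<Rightarrow> real) \<Rightarrow> ('k series \<Rightarrow> real)" where
  "restr absv \<rho> N x = (\<lambda>f. if f \<in> tate absv \<rho> {..<N} then x f else 0)"

inductive_set semianalytic_sets ::
  "('k series \<Rightarrow> real) set \<Rightarrow> 'k series set \<Rightarrow> ('k series \<Rightarrow> real) set set"
  for P F where
  basic: "f \<in> F \<Longrightarrow> g \<in> F \<Longrightarrow> {x\<in>P. x f \<le> x g} \<in> semianalytic_sets P F"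
| compl: "A \<in> semianalytic_sets P F \<Longrightarrow> P - A \<in> semianalytic_sets P F"
| union: "A \<in> semianalytic_sets P F \<Longrightarrow> B \<in> semianalytic_sets P F \<Longrightarrow> A \<union> B \<in> semianalytic_sets P F"

definition semianalytic :: "('k::field \<Rightarrow> real) \<Rightarrow> (nat \<Rightarrow> real) \<Rightarrow> nat \<Rightarrow> 'k series set
                            \<Rightarrow> ('k series \<Rightarrow> real) set \<Rightarrow> bool" where
  "semianalytic absv \<rho> N I T \<longleftrightarrow>
     T \<in> semianalytic_sets (spec absv \<rho> {..<N} I) (tate absv \<rho> {..<N})"

text \<open>Z = M(k{rho^-1 T_0..T_(N-1)}/I); Z x B^m_s uses extra variables N..N+m-1 of radius s.\<close>
definition oc_subanalytic :: "('k::field \<Rightarrow> real) \<Rightarrow> (nat \<Rightarrow> real) \<Rightarrow> nat \<Rightarrow> 'k series set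
                              \<Rightarrow> ('k series \<Rightarrow> real) set \<Rightarrow> bool" where
  "oc_subanalytic absv \<rho> N I S \<longleftrightarrow>
     (\<exists>m::nat. \<exists>s::real. \<exists>T. s > 1 \<and>
        semianalytic absv (\<lambda>i. if i < N then \<rho> i else s) (N + m) I T \<and>
        S = restr absv \<rho> N ` (T \<inter> {x. \<forall>j\<in>{N..<N+m}. x (ser_var j) \<le> 1}))"

end

theory Submission
  imports Defs "HOL-Real_Asymp.Real_Asymp" "HOL-Library.FuncSet"
begin

(* Write A_rho for the Tate algebra k{rho^-1 T_0..T_(N-1)} and U for the unit polydisc
   {x. x(T_j) <= 1 for all j}.  The heart of the proof is that the points of U do not depend
   on the ambient polyradius: if 1 <= rho' <= rho, then restriction along A_rho \<subseteq> A_rho'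
   maps the points of M(A_rho'/I) lying in U onto those of M(A_rho/I) lying in U.  For the
   surjectivity, a point y of M(A_rho/I) with y(T_j) <= 1 satisfies the spectral bound
   y(p) <= |p|_rho' for every polynomial p (n-th root trick on y(p^n)), so y is 1-Lipschitz
   for the Gauss norm of rho' on polynomials and extends by continuity, via truncations of
   power series, to a point of M(A_rho'/I).

   Consequently every semianalytic T over radius
   rho has a semianalytic T' over radius rho' with the same unit part.  Given a presentation
   S = restr(T \<inter> U_m) with T over the radii (1, r, s), all non-unit radii are shrunk to a
   common s' = min(s, r_i) > 1; the projection of S \<inter> B^n is then the projection of
   T' \<inter> U_(n+m), an overconvergent subanalytic subset of X. *)

text \<open>The n-th root trick: a polynomially growing factor disappears under n-th roots.\<close>
lemma le_of_power_bound:
  fixes a b K :: real and L :: nat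
  assumes a0: "0 \<le> a" and b0: "0 \<le> b" and H: "\<forall>n\<ge>1. a ^ n \<le> K * (real n + 1) ^ L * b ^ n"
  shows "a \<le> b"
proof (rule ccontr)
  assume "\<not> a \<le> b"
  hence ab: "b < a" by simp
  have H1: "a \<le> K * 2 ^ L * b" using H[rule_format, of 1] by simp
  show False
  proof (cases "b = 0")
    case True thus ?thesis using H1 ab by simp
  next
    case False
    hence bp: "0 < b" using b0 by simp
    have Kp: "0 < K"
    proof (rule ccontr)
      assume "\<not> 0 < K"
      hence "K * 2 ^ L * b \<le> 0" using bp by (simp add: mult_nonpos_nonneg)
      thus False using H1 ab bp by simp
    qed
    have ap: "0 < a" using ab bp by simp
    have le: "ln (a / b) \<le> ln K / real n + real L * (ln (real n + 1) / real n)" if n1: "n \<ge> 1" for n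
    proof -
      have "(a / b) ^ n \<le> K * (real n + 1) ^ L"
        using H n1 bp by (simp add: power_divide divide_le_eq)
      hence "ln ((a / b) ^ n) \<le> ln (K * (real n + 1) ^ L)"
        using ap bp Kp by (subst ln_le_cancel_iff) auto
      hence "real n * ln (a / b) \<le> ln K + real L * ln (real n + 1)"
        using ap bp Kp by (simp add: ln_realpow ln_mult)
      hence "ln (a / b) \<le> (ln K + real L * ln (real n + 1)) / real n"
        using n1 by (simp add: le_divide_eq mult.commute)
      thus ?thesis by (simp add: add_divide_distrib)
    qed
    have "(\<lambda>n. ln K / real n + real L * (ln (real n + 1) / real n)) \<longlonglongrightarrow> 0"
      by real_asymp
    hence "ln (a / b) \<le> 0" by (rule LIMSEQ_le_const) (use le in auto)
    moreover have "0 < ln (a / b)" using ab bp by simp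
    ultimately show False by simp
  qed
qed

lemma tendsto_by_dist_bound:
  fixes X \<delta> :: "nat \<Rightarrow> real"
  assumes "\<And>n. \<bar>X n - a\<bar> \<le> \<delta> n" and "\<delta> \<longlonglongrightarrow> 0"
  shows "X \<longlonglongrightarrow> a"
proof (rule tendsto_sandwich[of "\<lambda>n. a - \<delta> n" _ _ "\<lambda>n. a + \<delta> n"])
  have "a - \<delta> n \<le> X n \<and> X n \<le> a + \<delta> n" for n using assms(1)[of n] by (auto simp: abs_le_iff)
  thus "\<forall>\<^sub>F n in sequentially. a - \<delta> n \<le> X n" "\<forall>\<^sub>F n in sequentially. X n \<le> a + \<delta> n"
    by (auto intro: always_eventually)
  show "(\<lambda>n. a - \<delta> n) \<longlonglongrightarrow> a" using tendsto_diff[OF tendsto_const assms(2), of a] by simp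
  show "(\<lambda>n. a + \<delta> n) \<longlonglongrightarrow> a" using tendsto_add[OF tendsto_const assms(2), of a] by simp
qed

locale ultrametric_abs =
  fixes absv :: "'k::field \<Rightarrow> real"
  assumes nonarch: "nonarch_abs absv"
begin

lemma av_nonneg: "0 \<le> absv x" using nonarch unfolding nonarch_abs_def by blast
lemma av_zero_iff: "absv x = 0 \<longleftrightarrow> x = 0" using nonarch unfolding nonarch_abs_def by blast
lemma av_mult: "absv (x * y) = absv x * absv y" using nonarch unfolding nonarch_abs_def by blast
lemma av_add: "absv (x + y) \<le> max (absv x) (absv y)" using nonarch unfolding nonarch_abs_def by blast

lemma av_0 [simp]: "absv 0 = 0" using av_zero_iff by simp

lemma av_1 [simp]: "absv 1 = 1"
proof -
  have "absv 1 = absv 1 * absv 1" using av_mult[of 1 1] by simp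
  moreover have "absv 1 \<noteq> 0" using av_zero_iff by simp
  ultimately show ?thesis by (metis mult_cancel_left2)
qed

lemma av_uminus: "absv (- x) = absv x"
proof -
  have "absv (-1) * absv (-1) = 1" using av_mult[of "-1" "-1"] by simp
  hence "absv (-1) = 1" using av_nonneg[of "-1"]
    by (metis abs_of_nonneg real_sqrt_abs2 real_sqrt_one power2_eq_square)
  thus ?thesis using av_mult[of "-1" x] by simp
qed

lemma av_diff_commute: "absv (x - y) = absv (y - x)"
  by (metis av_uminus minus_diff_eq)

lemma av_diff: "absv (x - y) \<le> max (absv x) (absv y)"
  using av_add[of x "-y"] av_uminus[of y] by simp

lemma av_sum_le:
  assumes "finite A" and "\<forall>a\<in>A. absv (h a) \<le> B" and "0 \<le> B"
  shows "absv (sum h A) \<le> B"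
  using assms
proof (induction A rule: finite_induct)
  case (insert a A)
  have "absv (sum h (insert a A)) \<le> max (absv (h a)) (absv (sum h A))"
    using insert.hyps av_add by simp
  thus ?case using insert by (auto simp: max_def split: if_splits)
qed simp

lemma av_sum_less:
  assumes "finite A" and "\<forall>a\<in>A. absv (h a) < B" and "0 < B"
  shows "absv (sum h A) < B"
  using assms
proof (induction A rule: finite_induct)
  case (insert a A)
  have "absv (sum h (insert a A)) \<le> max (absv (h a)) (absv (sum h A))"
    using insert.hyps av_add by simp
  thus ?case using insert by (auto simp: max_def split: if_splits)
qed simp

end

definition ser_supp :: "'k::zero series \<Rightarrow> (nat \<Rightarrow> nat) set" where
  "ser_supp f = {\<nu>. f \<nu> \<noteq> 0}"

definition ser_sub :: "'k::field series \<Rightarrow> 'k series \<Rightarrow> 'k series" where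
  "ser_sub a b = (\<lambda>\<nu>. a \<nu> - b \<nu>)"

definition ser_monom :: "'k::field \<Rightarrow> (nat \<Rightarrow> nat) \<Rightarrow> 'k series" where
  "ser_monom c \<nu> = (\<lambda>\<mu>. if \<mu> = \<nu> then c else 0)"

definition ser_trunc :: "nat \<Rightarrow> 'k::field series \<Rightarrow> 'k series" where
  "ser_trunc M f = (\<lambda>\<nu>. if \<forall>i. \<nu> i \<le> M then f \<nu> else 0)"

definition mi_box :: "nat set \<Rightarrow> nat \<Rightarrow> (nat \<Rightarrow> nat) set" where
  "mi_box V M = {\<nu>\<in>multi_indices V. \<forall>i. \<nu> i \<le> M}"

definition is_poly :: "nat set \<Rightarrow> 'k::zero series \<Rightarrow> bool" where
  "is_poly V p \<longleftrightarrow> finite (ser_supp p) \<and> ser_supp p \<subseteq> multi_indices V"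

definition ser_pow :: "'k::field series \<Rightarrow> nat \<Rightarrow> 'k series" where
  "ser_pow p n = (ser_mul p ^^ n) ser_one"

lemma ser_one_monom: "ser_one = ser_monom 1 (\<lambda>_. 0)"
  unfolding ser_one_def ser_monom_def by simp

lemma ser_var_monom: "ser_var j = ser_monom 1 (\<lambda>i. if i = j then 1 else 0)"
  unfolding ser_var_def ser_monom_def by simp

lemma mono_rad_eq_prod:
  assumes "finite S" and "{i. \<nu> i \<noteq> 0} \<subseteq> S"
  shows "mono_rad \<rho> \<nu> = (\<Prod>i\<in>S. \<rho> i ^ \<nu> i)"
  unfolding mono_rad_def by (rule prod.mono_neutral_left) (use assms in auto)

lemma mono_rad_pos: "\<forall>i. 0 < \<rho> i \<Longrightarrow> 0 < mono_rad \<rho> \<nu>"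
  unfolding mono_rad_def by (intro prod_pos) auto

lemma mono_rad_ge_1: "\<forall>i. 1 \<le> \<rho> i \<Longrightarrow> 1 \<le> mono_rad \<rho> \<nu>"
  unfolding mono_rad_def by (intro prod_ge_1) auto

lemma mono_rad_add:
  assumes "finite {i. \<alpha> i \<noteq> 0}" and "finite {i. \<beta> i \<noteq> 0}"
  shows "mono_rad \<rho> (\<lambda>i. \<alpha> i + \<beta> i) = mono_rad \<rho> \<alpha> * mono_rad \<rho> \<beta>"
proof -
  let ?S = "{i. \<alpha> i \<noteq> 0} \<union> {i. \<beta> i \<noteq> 0}"
  have fS: "finite ?S" using assms by simp
  have "mono_rad \<rho> (\<lambda>i. \<alpha> i + \<beta> i) = (\<Prod>i\<in>?S. \<rho> i ^ (\<alpha> i + \<beta> i))"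
    by (rule mono_rad_eq_prod[OF fS]) auto
  also have "\<dots> = (\<Prod>i\<in>?S. \<rho> i ^ \<alpha> i) * (\<Prod>i\<in>?S. \<rho> i ^ \<beta> i)"
    by (simp add: power_add prod.distrib)
  also have "\<dots> = mono_rad \<rho> \<alpha> * mono_rad \<rho> \<beta>"
    using mono_rad_eq_prod[OF fS, of \<alpha> \<rho>] mono_rad_eq_prod[OF fS, of \<beta> \<rho>] by auto
  finally show ?thesis .
qed

lemma mono_rad_mono:
  assumes "\<forall>i. \<nu> i \<noteq> 0 \<longrightarrow> 0 < \<rho>' i" and "\<forall>i. \<nu> i \<noteq> 0 \<longrightarrow> \<rho>' i \<le> \<rho> i"
  shows "mono_rad \<rho>' \<nu> \<le> mono_rad \<rho> \<nu>"
  unfolding mono_rad_def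
  by (rule prod_mono) (use assms in \<open>auto intro: power_mono less_imp_le\<close>)

lemma multi_indices_zero: "(\<lambda>_. 0) \<in> multi_indices V"
  unfolding multi_indices_def by simp

lemma multi_indices_unit: "j \<in> V \<Longrightarrow> (\<lambda>i. if i = j then n else 0) \<in> multi_indices V"
  unfolding multi_indices_def by (auto intro: finite_subset[of _ "{j}"])

lemma multi_indices_finite: "\<nu> \<in> multi_indices V \<Longrightarrow> finite {i. \<nu> i \<noteq> 0}"
  unfolding multi_indices_def by auto

lemma multi_indices_add:
  "\<alpha> \<in> multi_indices V \<Longrightarrow> \<beta> \<in> multi_indices V \<Longrightarrow> (\<lambda>i. \<alpha> i + \<beta> i) \<in> multi_indices V"
  unfolding multi_indices_def by (auto elim!: finite_subset[rotated])

lemma multi_indices_le: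
  assumes "\<nu> \<in> multi_indices V" and "\<forall>i. \<alpha> i \<le> \<nu> i"
  shows "\<alpha> \<in> multi_indices V"
proof -
  have "{i. \<alpha> i \<noteq> 0} \<subseteq> {i. \<nu> i \<noteq> 0}" using assms(2) by (metis (mono_tags) Collect_mono le_zero_eq)
  thus ?thesis using assms(1) unfolding multi_indices_def by (auto intro: finite_subset)
qed

lemma mi_box_image: "mi_box V M \<subseteq> (\<lambda>g i. if i \<in> V then g i else 0) ` PiE V (\<lambda>_. {..M})"
proof
  fix \<nu> assume "\<nu> \<in> mi_box V M"
  hence \<nu>: "\<nu> \<in> multi_indices V" "\<forall>i. \<nu> i \<le> M" unfolding mi_box_def by auto
  have "\<nu> = (\<lambda>i. if i \<in> V then restrict \<nu> V i else 0)"
    using \<nu> unfolding multi_indices_def by (auto simp: fun_eq_iff restrict_def)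
  moreover have "restrict \<nu> V \<in> PiE V (\<lambda>_. {..M})" using \<nu> by auto
  ultimately show "\<nu> \<in> (\<lambda>g i. if i \<in> V then g i else 0) ` PiE V (\<lambda>_. {..M})" by blast
qed

lemma mi_box_finite: "finite V \<Longrightarrow> finite (mi_box V M)"
  by (rule finite_subset[OF mi_box_image]) (auto intro: finite_PiE)

text \<open>A box of side M in |V| variables has at most (M+1)^|V| points: the polynomial growth
  that the n-th root trick absorbs.\<close>
lemma mi_box_card: "finite V \<Longrightarrow> card (mi_box V M) \<le> (M + 1) ^ card V"
proof -
  assume fV: "finite V"
  have "card (mi_box V M) \<le> card ((\<lambda>g i. if i \<in> V then g i else 0) ` PiE V (\<lambda>_. {..M}))"
    by (rule card_mono[OF _ mi_box_image]) (use fV in \<open>auto intro: finite_PiE\<close>)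
  also have "\<dots> \<le> card (PiE V (\<lambda>_. {..M}::nat set))"
    by (rule card_image_le) (use fV in \<open>auto intro: finite_PiE\<close>)
  also have "\<dots> = (M + 1) ^ card V" using fV by (simp add: card_PiE)
  finally show ?thesis .
qed

lemma finite_in_mi_box:
  assumes "finite A" and "A \<subseteq> multi_indices V"
  shows "\<exists>M. A \<subseteq> mi_box V M"
proof -
  let ?deg = "\<lambda>\<nu>::nat \<Rightarrow> nat. \<Sum>j\<in>{j. \<nu> j \<noteq> 0}. \<nu> j"
  have "\<nu> i \<le> (\<Sum>\<mu>\<in>A. ?deg \<mu>)" if "\<nu> \<in> A" for \<nu> i
  proof -
    have fs: "finite {j. \<nu> j \<noteq> 0}" using that assms(2) multi_indices_finite by blast
    have "\<nu> i \<le> ?deg \<nu>"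
      by (cases "\<nu> i = 0") (use fs in \<open>auto intro: member_le_sum\<close>)
    also have "\<dots> \<le> (\<Sum>\<mu>\<in>A. ?deg \<mu>)" by (rule member_le_sum[OF that _ assms(1)]) simp
    finally show ?thesis .
  qed
  thus ?thesis using assms(2) unfolding mi_box_def by blast
qed

lemma lower_set_finite:
  assumes "\<nu> \<in> multi_indices V"
  shows "finite {\<alpha>. \<forall>i. \<alpha> i \<le> \<nu> i}"
proof -
  let ?S = "{i. \<nu> i \<noteq> 0}"
  have fS: "finite ?S" using assms multi_indices_finite by blast
  have \<nu>S: "\<nu> \<in> multi_indices ?S" unfolding multi_indices_def using fS by auto
  obtain M where "{\<nu>} \<subseteq> mi_box ?S M" using finite_in_mi_box[of "{\<nu>}" ?S] \<nu>S by auto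
  hence "{\<alpha>. \<forall>i. \<alpha> i \<le> \<nu> i} \<subseteq> mi_box ?S M"
    using \<nu>S multi_indices_le unfolding mi_box_def by (auto intro: le_trans)
  thus ?thesis using mi_box_finite[OF fS] finite_subset by blast
qed

lemma ser_mul_monom:
  assumes "finite {i. \<alpha> i \<noteq> 0}" and "finite {i. \<beta> i \<noteq> 0}"
  shows "ser_mul (ser_monom a \<alpha>) (ser_monom b \<beta>) = ser_monom (a * b) (\<lambda>i. \<alpha> i + \<beta> i)"
proof
  fix \<mu>
  show "ser_mul (ser_monom a \<alpha>) (ser_monom b \<beta>) \<mu> = ser_monom (a * b) (\<lambda>i. \<alpha> i + \<beta> i) \<mu>"
  proof (cases "\<mu> = (\<lambda>i. \<alpha> i + \<beta> i)")
    case True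
    have fin: "finite {\<gamma>. \<forall>i. \<gamma> i \<le> \<mu> i}"
    proof (rule lower_set_finite)
      show "\<mu> \<in> multi_indices ({i. \<alpha> i \<noteq> 0} \<union> {i. \<beta> i \<noteq> 0})"
        unfolding multi_indices_def True using assms by (auto intro: finite_subset[rotated])
    qed
    have "ser_mul (ser_monom a \<alpha>) (ser_monom b \<beta>) \<mu> =
        (\<Sum>\<gamma>\<in>{\<gamma>. \<forall>i. \<gamma> i \<le> \<mu> i}. if \<gamma> = \<alpha> then a * b else 0)"
      unfolding ser_mul_def ser_monom_def by (rule sum.cong) (auto simp: True fun_eq_iff)
    also have "\<dots> = a * b" using fin by (simp add: True)
    finally show ?thesis by (simp add: ser_monom_def True)
  next
    case False
    have "\<not> (\<gamma> = \<alpha> \<and> (\<lambda>i. \<mu> i - \<gamma> i) = \<beta>)" if "\<forall>i. \<gamma> i \<le> \<mu> i" for \<gamma>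
    proof
      assume "\<gamma> = \<alpha> \<and> (\<lambda>i. \<mu> i - \<gamma> i) = \<beta>"
      hence "\<mu> = (\<lambda>i. \<alpha> i + \<beta> i)" using that by (simp add: fun_eq_iff) (metis le_add_diff_inverse)
      thus False using False by simp
    qed
    hence "ser_mul (ser_monom a \<alpha>) (ser_monom b \<beta>) \<mu> = 0"
      unfolding ser_mul_def ser_monom_def by (intro sum.neutral) auto
    thus ?thesis using False by (simp add: ser_monom_def)
  qed
qed

lemma ser_monom_step:
  assumes fin: "finite {i. \<nu> i \<noteq> 0}" and j: "\<nu> j \<noteq> 0"
  shows "ser_monom c \<nu> = ser_mul (ser_monom c (\<nu>(j := \<nu> j - 1))) (ser_var j)"
proof -
  have "ser_mul (ser_monom c (\<nu>(j := \<nu> j - 1))) (ser_monom 1 (\<lambda>i. if i = j then 1 else 0)) =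
      ser_monom (c * 1) (\<lambda>i. (\<nu>(j := \<nu> j - 1)) i + (if i = j then 1 else 0))"
    by (rule ser_mul_monom) (auto intro: finite_subset[OF _ fin] finite_subset[of _ "{j}"])
  moreover have "(\<lambda>i. (\<nu>(j := \<nu> j - 1)) i + (if i = j then 1 else 0)) = \<nu>" using j by auto
  ultimately show ?thesis by (simp add: ser_var_monom)
qed

lemma prod_power_step:
  fixes a :: "nat \<Rightarrow> 'a::comm_monoid_mult"
  assumes V: "finite V" "j \<in> V" and j: "\<nu> j \<noteq> 0"
  shows "(\<Prod>i\<in>V. a i ^ (\<nu>(j := \<nu> j - 1)) i) * a j = (\<Prod>i\<in>V. a i ^ \<nu> i)"
proof -
  let ?P = "\<Prod>i\<in>V - {j}. a i ^ \<nu> i"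
  have "(\<Prod>i\<in>V - {j}. a i ^ (\<nu>(j := \<nu> j - 1)) i) = ?P" by (rule prod.cong) auto
  hence "(\<Prod>i\<in>V. a i ^ (\<nu>(j := \<nu> j - 1)) i) * a j = (a j ^ (\<nu> j - 1) * a j) * ?P"
    using V by (simp add: prod.remove ac_simps)
  also have "a j ^ (\<nu> j - 1) * a j = a j ^ \<nu> j" using j by (metis Suc_pred' neq0_conv power_Suc2)
  finally show ?thesis using V by (simp add: prod.remove)
qed

lemma ser_mul_sub_expand:
  "ser_sub (ser_mul f g) (ser_mul p q) = ser_add (ser_mul (ser_sub f p) g) (ser_mul p (ser_sub g q))"
  unfolding ser_sub_def ser_add_def ser_mul_def
  by (simp add: fun_eq_iff sum.distrib[symmetric] sum_subtractf[symmetric] algebra_simps)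

lemma tate_vanish: "f \<in> tate absv \<rho> V \<Longrightarrow> \<nu> \<notin> multi_indices V \<Longrightarrow> f \<nu> = 0"
  unfolding tate_def by auto

lemma tate_finite_level: "f \<in> tate absv \<rho> V \<Longrightarrow> 0 < e \<Longrightarrow> finite {\<nu>. e \<le> absv (f \<nu>) * mono_rad \<rho> \<nu>}"
  unfolding tate_def by auto

lemma tateI:
  assumes "\<And>\<nu>. \<nu> \<notin> multi_indices V \<Longrightarrow> f \<nu> = 0"
    and "\<And>e. 0 < e \<Longrightarrow> finite {\<nu>. e \<le> absv (f \<nu>) * mono_rad \<rho> \<nu>}"
  shows "f \<in> tate absv \<rho> V"
  unfolding tate_def using assms by auto

context ultrametric_abs
begin

lemma poly_tate: "is_poly V p \<Longrightarrow> p \<in> tate absv \<rho> V"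
proof (rule tateI)
  assume p: "is_poly V p"
  show "p \<nu> = 0" if "\<nu> \<notin> multi_indices V" for \<nu>
    using p that unfolding is_poly_def ser_supp_def by auto
  show "finite {\<nu>. e \<le> absv (p \<nu>) * mono_rad \<rho> \<nu>}" if "0 < e" for e
    by (rule finite_subset[of _ "ser_supp p"]) (use p that in \<open>auto simp: is_poly_def ser_supp_def\<close>)
qed

lemma monom_poly: "\<nu> \<in> multi_indices V \<Longrightarrow> is_poly V (ser_monom c \<nu>)"
  unfolding is_poly_def ser_supp_def ser_monom_def by (auto intro: finite_subset[of _ "{\<nu>}"])

lemma monom_tate: "\<nu> \<in> multi_indices V \<Longrightarrow> ser_monom c \<nu> \<in> tate absv \<rho> V"
  by (rule poly_tate[OF monom_poly])

lemma zero_tate: "ser_zero \<in> tate absv \<rho> V"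
  by (rule poly_tate) (simp add: is_poly_def ser_supp_def ser_zero_def)

lemma one_tate: "ser_one \<in> tate absv \<rho> V"
  unfolding ser_one_monom by (rule monom_tate[OF multi_indices_zero])

lemma var_tate: "j \<in> V \<Longrightarrow> ser_var j \<in> tate absv \<rho> V"
  unfolding ser_var_monom by (rule monom_tate[OF multi_indices_unit])

end

lemma poly_mi_box: "is_poly V p \<Longrightarrow> \<exists>D. ser_supp p \<subseteq> mi_box V D"
  unfolding is_poly_def by (rule finite_in_mi_box) auto

lemma mi_box_poly: "finite V \<Longrightarrow> ser_supp p \<subseteq> mi_box V D \<Longrightarrow> is_poly V p"
  unfolding is_poly_def using mi_box_finite[of V D] unfolding mi_box_def by (auto intro: finite_subset)

lemma sub_poly: "is_poly V p \<Longrightarrow> is_poly V q \<Longrightarrow> is_poly V (ser_sub p q)"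
proof -
  assume "is_poly V p" "is_poly V q"
  moreover have "ser_supp (ser_sub p q) \<subseteq> ser_supp p \<union> ser_supp q"
    unfolding ser_supp_def ser_sub_def by auto
  ultimately show ?thesis unfolding is_poly_def by (meson finite_Un finite_subset le_sup_iff order_trans)
qed

lemma trunc_supp:
  assumes "f \<in> tate absv \<rho> V"
  shows "ser_supp (ser_trunc M f) \<subseteq> mi_box V M"
  unfolding ser_supp_def ser_trunc_def mi_box_def using tate_vanish[OF assms] by auto

lemma trunc_poly: "finite V \<Longrightarrow> f \<in> tate absv \<rho> V \<Longrightarrow> is_poly V (ser_trunc M f)"
  by (rule mi_box_poly[OF _ trunc_supp])

section \<open>The Gauss norm\<close>

locale tate_algebra = ultrametric_abs +
  fixes \<rho> :: "nat \<Rightarrow> real"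
  assumes radius_pos: "\<forall>i. 0 < \<rho> i"
begin

lemma term_nonneg: "0 \<le> absv (f \<nu>) * mono_rad \<rho> \<nu>"
  using av_nonneg mono_rad_pos[OF radius_pos] by (simp add: less_imp_le)

lemma tate_terms_bdd:
  assumes f: "f \<in> tate absv \<rho> V"
  shows "bdd_above (range (\<lambda>\<nu>. absv (f \<nu>) * mono_rad \<rho> \<nu>))"
proof -
  let ?t = "\<lambda>\<nu>. absv (f \<nu>) * mono_rad \<rho> \<nu>"
  have "range ?t \<subseteq> ?t ` {\<nu>. 1 \<le> ?t \<nu>} \<union> {..1}" by auto
  moreover have "bdd_above (?t ` {\<nu>. 1 \<le> ?t \<nu>} \<union> {..1})"
    using tate_finite_level[OF f, of 1] by (simp add: bdd_above_Un)
  ultimately show ?thesis by (rule bdd_above_mono[rotated])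
qed

lemma gauss_ge: "f \<in> tate absv \<rho> V \<Longrightarrow> absv (f \<nu>) * mono_rad \<rho> \<nu> \<le> gauss absv \<rho> f"
  unfolding gauss_def by (rule cSup_upper) (auto intro: tate_terms_bdd)

lemma gauss_le: "(\<And>\<nu>. absv (f \<nu>) * mono_rad \<rho> \<nu> \<le> B) \<Longrightarrow> gauss absv \<rho> f \<le> B"
  unfolding gauss_def by (rule cSup_least) auto

lemma gauss_nonneg: "f \<in> tate absv \<rho> V \<Longrightarrow> 0 \<le> gauss absv \<rho> f"
  using gauss_ge term_nonneg order_trans by blast

lemma tate_dominated_by_max:
  assumes f: "f \<in> tate absv \<rho> V" and g: "g \<in> tate absv \<rho> V"
    and dom: "\<And>\<nu>. absv (h \<nu>) \<le> max (absv (f \<nu>)) (absv (g \<nu>))"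
  shows "h \<in> tate absv \<rho> V" and "gauss absv \<rho> h \<le> max (gauss absv \<rho> f) (gauss absv \<rho> g)"
proof -
  have terms_dom: "absv (h \<nu>) * mono_rad \<rho> \<nu> \<le>
      max (absv (f \<nu>) * mono_rad \<rho> \<nu>) (absv (g \<nu>) * mono_rad \<rho> \<nu>)" for \<nu>
    using dom[of \<nu>] mono_rad_pos[OF radius_pos, of \<nu>] by (auto simp: max_def mult_right_mono)
  show "h \<in> tate absv \<rho> V"
  proof (rule tateI)
    fix \<nu> assume "\<nu> \<notin> multi_indices V"
    hence "absv (h \<nu>) \<le> 0" using dom[of \<nu>] tate_vanish[OF f] tate_vanish[OF g] by simp
    thus "h \<nu> = 0" using av_nonneg[of "h \<nu>"] av_zero_iff by simp
  next
    fix e :: real assume e: "0 < e"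
    have "{\<nu>. e \<le> absv (h \<nu>) * mono_rad \<rho> \<nu>} \<subseteq>
        {\<nu>. e \<le> absv (f \<nu>) * mono_rad \<rho> \<nu>} \<union> {\<nu>. e \<le> absv (g \<nu>) * mono_rad \<rho> \<nu>}"
      using terms_dom by (auto simp: le_max_iff_disj intro: order_trans)
    thus "finite {\<nu>. e \<le> absv (h \<nu>) * mono_rad \<rho> \<nu>}"
      using tate_finite_level[OF f e] tate_finite_level[OF g e] finite_subset by blast
  qed
  show "gauss absv \<rho> h \<le> max (gauss absv \<rho> f) (gauss absv \<rho> g)"
    by (rule gauss_le) (meson gauss_ge[OF f] gauss_ge[OF g] max.mono order_trans terms_dom)
qed

lemma add_tate:
  assumes "f \<in> tate absv \<rho> V" and "g \<in> tate absv \<rho> V"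
  shows "ser_add f g \<in> tate absv \<rho> V"
    and "gauss absv \<rho> (ser_add f g) \<le> max (gauss absv \<rho> f) (gauss absv \<rho> g)"
  by (rule tate_dominated_by_max[OF assms], simp add: ser_add_def av_add)+

lemma sub_tate:
  assumes "f \<in> tate absv \<rho> V" and "g \<in> tate absv \<rho> V"
  shows "ser_sub f g \<in> tate absv \<rho> V"
    and "gauss absv \<rho> (ser_sub f g) \<le> max (gauss absv \<rho> f) (gauss absv \<rho> g)"
  by (rule tate_dominated_by_max[OF assms], simp add: ser_sub_def av_diff)+

lemma gauss_sub_commute: "gauss absv \<rho> (ser_sub f g) = gauss absv \<rho> (ser_sub g f)"
  unfolding gauss_def ser_sub_def using av_diff_commute by simp

lemma gauss_mono:
  assumes g: "g \<in> tate absv \<rho> V" and le: "\<And>\<nu>. absv (f \<nu>) \<le> absv (g \<nu>)"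
  shows "gauss absv \<rho> f \<le> gauss absv \<rho> g"
proof (rule gauss_le)
  fix \<nu>
  have "absv (f \<nu>) * mono_rad \<rho> \<nu> \<le> absv (g \<nu>) * mono_rad \<rho> \<nu>"
    using le mono_rad_pos[OF radius_pos, of \<nu>] by (simp add: mult_right_mono)
  thus "absv (f \<nu>) * mono_rad \<rho> \<nu> \<le> gauss absv \<rho> g" using gauss_ge[OF g] order_trans by blast
qed

lemma gauss_trunc_le: "f \<in> tate absv \<rho> V \<Longrightarrow> gauss absv \<rho> (ser_trunc M f) \<le> gauss absv \<rho> f"
  by (rule gauss_mono) (simp_all add: ser_trunc_def av_nonneg)

lemma gauss_monom:
  assumes "\<nu> \<in> multi_indices V"
  shows "gauss absv \<rho> (ser_monom c \<nu>) = absv c * mono_rad \<rho> \<nu>"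
proof (rule antisym)
  show "gauss absv \<rho> (ser_monom c \<nu>) \<le> absv c * mono_rad \<rho> \<nu>"
    by (rule gauss_le) (use term_nonneg[of "\<lambda>_. c" \<nu>] in \<open>auto simp: ser_monom_def\<close>)
  show "absv c * mono_rad \<rho> \<nu> \<le> gauss absv \<rho> (ser_monom c \<nu>)"
    using gauss_ge[OF monom_tate[OF assms], of c \<nu>] by (simp add: ser_monom_def)
qed

lemma gauss_one: "gauss absv \<rho> ser_one = 1"
  unfolding ser_one_monom by (simp add: gauss_monom[OF multi_indices_zero] mono_rad_def)

lemma trunc_tendsto:
  assumes f: "f \<in> tate absv \<rho> V" and fV: "finite V"
  shows "(\<lambda>M. gauss absv \<rho> (ser_sub f (ser_trunc M f))) \<longlonglongrightarrow> 0"
proof (rule LIMSEQ_I)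
  fix e :: real assume e: "0 < e"
  let ?A = "{\<nu>. e / 2 \<le> absv (f \<nu>) * mono_rad \<rho> \<nu>}"
  have "?A \<subseteq> multi_indices V"
  proof
    fix \<nu> assume "\<nu> \<in> ?A"
    hence "f \<nu> \<noteq> 0" using e by (auto simp: not_le)
    thus "\<nu> \<in> multi_indices V" using tate_vanish[OF f] by blast
  qed
  moreover have "finite ?A" using tate_finite_level[OF f, of "e / 2"] e by simp
  ultimately obtain M0 where M0: "?A \<subseteq> mi_box V M0" using finite_in_mi_box by blast
  have "norm (gauss absv \<rho> (ser_sub f (ser_trunc M f)) - 0) < e" if M: "M0 \<le> M" for M
  proof -
    have "gauss absv \<rho> (ser_sub f (ser_trunc M f)) \<le> e / 2"
    proof (rule gauss_le)
      fix \<nu>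
      show "absv (ser_sub f (ser_trunc M f) \<nu>) * mono_rad \<rho> \<nu> \<le> e / 2"
      proof (cases "\<forall>i. \<nu> i \<le> M")
        case True thus ?thesis using e by (simp add: ser_sub_def ser_trunc_def)
      next
        case False
        then obtain i where "M0 < \<nu> i" using M by (meson le_trans not_le)
        hence "\<nu> \<notin> mi_box V M0" unfolding mi_box_def by (simp add: not_le) blast
        hence "\<nu> \<notin> ?A" using M0 by blast
        thus ?thesis using False by (auto simp: ser_sub_def ser_trunc_def)
      qed
    qed
    moreover have "0 \<le> gauss absv \<rho> (ser_sub f (ser_trunc M f))"
      by (rule gauss_nonneg[OF sub_tate(1)[OF f poly_tate[OF trunc_poly[OF fV f]]]])
    ultimately show ?thesis using e by simp
  qed
  thus "\<exists>M0. \<forall>M\<ge>M0. norm (gauss absv \<rho> (ser_sub f (ser_trunc M f)) - 0) < e" by blast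
qed

end

context tate_algebra
begin

lemma mul_vanish:
  assumes f: "f \<in> tate absv \<rho> V" and g: "g \<in> tate absv \<rho> V" and \<nu>: "\<nu> \<notin> multi_indices V"
  shows "ser_mul f g \<nu> = 0"
  unfolding ser_mul_def
proof (rule sum.neutral, intro ballI)
  fix \<alpha> assume \<alpha>: "\<alpha> \<in> {\<alpha>. \<forall>i. \<alpha> i \<le> \<nu> i}"
  show "f \<alpha> * g (\<lambda>i. \<nu> i - \<alpha> i) = 0"
  proof (rule ccontr)
    assume "f \<alpha> * g (\<lambda>i. \<nu> i - \<alpha> i) \<noteq> 0"
    hence "\<alpha> \<in> multi_indices V" "(\<lambda>i. \<nu> i - \<alpha> i) \<in> multi_indices V"
      using tate_vanish[OF f] tate_vanish[OF g] by auto
    hence "(\<lambda>i. \<alpha> i + (\<nu> i - \<alpha> i)) \<in> multi_indices V" by (rule multi_indices_add)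
    moreover have "(\<lambda>i. \<alpha> i + (\<nu> i - \<alpha> i)) = \<nu>" using \<alpha> by (auto simp: fun_eq_iff)
    ultimately show False using \<nu> by simp
  qed
qed

lemma mul_summand_term:
  assumes \<nu>: "\<nu> \<in> multi_indices V" and \<alpha>: "\<forall>i. \<alpha> i \<le> \<nu> i"
  shows "absv (f \<alpha> * g (\<lambda>i. \<nu> i - \<alpha> i)) * mono_rad \<rho> \<nu> =
    (absv (f \<alpha>) * mono_rad \<rho> \<alpha>) * (absv (g (\<lambda>i. \<nu> i - \<alpha> i)) * mono_rad \<rho> (\<lambda>i. \<nu> i - \<alpha> i))"
proof -
  have "\<alpha> \<in> multi_indices V" "(\<lambda>i. \<nu> i - \<alpha> i) \<in> multi_indices V"
    using multi_indices_le[OF \<nu>] \<alpha> by auto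
  hence "mono_rad \<rho> (\<lambda>i. \<alpha> i + (\<nu> i - \<alpha> i)) = mono_rad \<rho> \<alpha> * mono_rad \<rho> (\<lambda>i. \<nu> i - \<alpha> i)"
    by (intro mono_rad_add) (auto dest: multi_indices_finite)
  moreover have "(\<lambda>i. \<alpha> i + (\<nu> i - \<alpha> i)) = \<nu>" using \<alpha> by (auto simp: fun_eq_iff)
  ultimately show ?thesis by (simp add: av_mult mult_ac)
qed

text \<open>Each term of fg is bounded by |f| |g|, by the ultrametric inequality on the product formula.\<close>
lemma mul_term_le:
  assumes f: "f \<in> tate absv \<rho> V" and g: "g \<in> tate absv \<rho> V"
  shows "absv (ser_mul f g \<nu>) * mono_rad \<rho> \<nu> \<le> gauss absv \<rho> f * gauss absv \<rho> g"
proof (cases "\<nu> \<in> multi_indices V")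
  case False
  thus ?thesis using mul_vanish[OF f g False] gauss_nonneg[OF f] gauss_nonneg[OF g] by simp
next
  case True
  have mp: "0 < mono_rad \<rho> \<nu>" by (rule mono_rad_pos[OF radius_pos])
  have "absv (ser_mul f g \<nu>) \<le> gauss absv \<rho> f * gauss absv \<rho> g / mono_rad \<rho> \<nu>"
    unfolding ser_mul_def
  proof (rule av_sum_le[OF lower_set_finite[OF True]], intro ballI)
    fix \<alpha> assume \<alpha>: "\<alpha> \<in> {\<alpha>. \<forall>i. \<alpha> i \<le> \<nu> i}"
    have "absv (f \<alpha> * g (\<lambda>i. \<nu> i - \<alpha> i)) * mono_rad \<rho> \<nu> =
        (absv (f \<alpha>) * mono_rad \<rho> \<alpha>) * (absv (g (\<lambda>i. \<nu> i - \<alpha> i)) * mono_rad \<rho> (\<lambda>i. \<nu> i - \<alpha> i))"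
      using mul_summand_term[OF True] \<alpha> by simp
    also have "\<dots> \<le> gauss absv \<rho> f * gauss absv \<rho> g"
      by (intro mult_mono gauss_ge[OF f] gauss_ge[OF g] gauss_nonneg[OF f] term_nonneg)
    finally have "absv (f \<alpha> * g (\<lambda>i. \<nu> i - \<alpha> i)) * mono_rad \<rho> \<nu> \<le> gauss absv \<rho> f * gauss absv \<rho> g" .
    thus "absv (f \<alpha> * g (\<lambda>i. \<nu> i - \<alpha> i)) \<le> gauss absv \<rho> f * gauss absv \<rho> g / mono_rad \<rho> \<nu>"
      using mp by (simp add: le_divide_eq)
  qed (use mp gauss_nonneg[OF f] gauss_nonneg[OF g] in simp)
  thus ?thesis using mp by (simp add: le_divide_eq)
qed

lemma gauss_mul:
  assumes "f \<in> tate absv \<rho> V" and "g \<in> tate absv \<rho> V"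
  shows "gauss absv \<rho> (ser_mul f g) \<le> gauss absv \<rho> f * gauss absv \<rho> g"
  by (rule gauss_le) (rule mul_term_le[OF assms])

text \<open>A large term of fg comes from a product of a large term of f with a large term of g,
  the only way a strictly small ultrametric sum can fail.\<close>
lemma mul_large_term:
  assumes f: "f \<in> tate absv \<rho> V" and g: "g \<in> tate absv \<rho> V"
    and F: "0 < gauss absv \<rho> f" and G: "0 < gauss absv \<rho> g"
    and e: "0 < e" and large: "e \<le> absv (ser_mul f g \<nu>) * mono_rad \<rho> \<nu>"
  shows "\<exists>\<alpha>. (\<forall>i. \<alpha> i \<le> \<nu> i) \<and> e / gauss absv \<rho> g \<le> absv (f \<alpha>) * mono_rad \<rho> \<alpha> \<and>
    e / gauss absv \<rho> f \<le> absv (g (\<lambda>i. \<nu> i - \<alpha> i)) * mono_rad \<rho> (\<lambda>i. \<nu> i - \<alpha> i)"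
proof (rule ccontr)
  let ?F = "gauss absv \<rho> f" and ?G = "gauss absv \<rho> g"
  assume small: "\<not> ?thesis"
  have mp: "0 < mono_rad \<rho> \<nu>" by (rule mono_rad_pos[OF radius_pos])
  have \<nu>: "\<nu> \<in> multi_indices V" using large mul_vanish[OF f g] e by fastforce
  have "absv (ser_mul f g \<nu>) < e / mono_rad \<rho> \<nu>"
    unfolding ser_mul_def
  proof (rule av_sum_less[OF lower_set_finite[OF \<nu>]], intro ballI)
    fix \<alpha> assume \<alpha>: "\<alpha> \<in> {\<alpha>. \<forall>i. \<alpha> i \<le> \<nu> i}"
    let ?x = "absv (f \<alpha>) * mono_rad \<rho> \<alpha>"
      and ?y = "absv (g (\<lambda>i. \<nu> i - \<alpha> i)) * mono_rad \<rho> (\<lambda>i. \<nu> i - \<alpha> i)"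
    have "\<not> (e / ?G \<le> ?x \<and> e / ?F \<le> ?y)" using small \<alpha> by blast
    hence "?x < e / ?G \<or> ?y < e / ?F" by linarith
    hence "?x * ?y < e"
    proof
      assume "?x < e / ?G"
      hence "?x * ?G < e" using G by (simp add: less_divide_eq)
      moreover have "?x * ?y \<le> ?x * ?G" by (rule mult_left_mono[OF gauss_ge[OF g] term_nonneg])
      ultimately show ?thesis by simp
    next
      assume "?y < e / ?F"
      hence "?y * ?F < e" using F by (simp add: less_divide_eq)
      moreover have "?x * ?y \<le> ?F * ?y" by (rule mult_right_mono[OF gauss_ge[OF f] term_nonneg])
      ultimately show ?thesis by (simp add: mult.commute)
    qed
    thus "absv (f \<alpha> * g (\<lambda>i. \<nu> i - \<alpha> i)) < e / mono_rad \<rho> \<nu>"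
      using mul_summand_term[OF \<nu>] \<alpha> mp by (simp add: less_divide_eq)
  qed (use e mp in simp)
  thus False using large mp by (simp add: less_divide_eq)
qed

lemma mul_tate:
  assumes f: "f \<in> tate absv \<rho> V" and g: "g \<in> tate absv \<rho> V"
  shows "ser_mul f g \<in> tate absv \<rho> V"
proof (rule tateI)
  fix \<nu> assume "\<nu> \<notin> multi_indices V" thus "ser_mul f g \<nu> = 0" by (rule mul_vanish[OF f g])
next
  fix e :: real assume e: "0 < e"
  let ?F = "gauss absv \<rho> f" and ?G = "gauss absv \<rho> g"
  let ?S = "{\<nu>. e \<le> absv (ser_mul f g \<nu>) * mono_rad \<rho> \<nu>}"
  show "finite ?S"
  proof (cases "?F = 0 \<or> ?G = 0")
    case True
    have "\<nu> \<notin> ?S" for \<nu>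
    proof -
      have "absv (ser_mul f g \<nu>) * mono_rad \<rho> \<nu> \<le> 0" using mul_term_le[OF f g, of \<nu>] True by auto
      thus ?thesis using e by simp
    qed
    hence "?S = {}" by blast
    thus ?thesis by simp
  next
    case False
    hence F: "0 < ?F" and G: "0 < ?G" using gauss_nonneg[OF f] gauss_nonneg[OF g] by auto
    let ?A = "{\<alpha>. e / ?G \<le> absv (f \<alpha>) * mono_rad \<rho> \<alpha>}"
      and ?B = "{\<beta>. e / ?F \<le> absv (g \<beta>) * mono_rad \<rho> \<beta>}"
    have "?S \<subseteq> (\<lambda>(\<alpha>, \<beta>). (\<lambda>i. \<alpha> i + \<beta> i)) ` (?A \<times> ?B)"
    proof
      fix \<nu> assume "\<nu> \<in> ?S"
      then obtain \<alpha> where \<alpha>: "\<forall>i. \<alpha> i \<le> \<nu> i" "\<alpha> \<in> ?A" "(\<lambda>i. \<nu> i - \<alpha> i) \<in> ?B"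
        using mul_large_term[OF f g F G e] by blast
      have "\<nu> = (\<lambda>(\<alpha>, \<beta>). (\<lambda>i. \<alpha> i + \<beta> i)) (\<alpha>, (\<lambda>i. \<nu> i - \<alpha> i))"
        using \<alpha>(1) by (auto simp: fun_eq_iff)
      thus "\<nu> \<in> (\<lambda>(\<alpha>, \<beta>). (\<lambda>i. \<alpha> i + \<beta> i)) ` (?A \<times> ?B)" using \<alpha>(2,3) by blast
    qed
    moreover have "finite ?A" "finite ?B"
      using tate_finite_level[OF f] tate_finite_level[OF g] e F G by simp_all
    ultimately show ?thesis by (meson finite_SigmaI finite_imageI finite_subset)
  qed
qed

lemma mul_supp_mi_box:
  assumes f: "f \<in> tate absv \<rho> V" and g: "g \<in> tate absv \<rho> V"
    and bf: "ser_supp f \<subseteq> mi_box V D1" and bg: "ser_supp g \<subseteq> mi_box V D2"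
  shows "ser_supp (ser_mul f g) \<subseteq> mi_box V (D1 + D2)"
proof
  fix \<nu> assume \<nu>: "\<nu> \<in> ser_supp (ser_mul f g)"
  hence \<nu>V: "\<nu> \<in> multi_indices V" using mul_vanish[OF f g] unfolding ser_supp_def by blast
  have "\<exists>\<alpha>. (\<forall>i. \<alpha> i \<le> \<nu> i) \<and> f \<alpha> * g (\<lambda>i. \<nu> i - \<alpha> i) \<noteq> 0"
  proof (rule ccontr)
    assume "\<not> ?thesis"
    hence "ser_mul f g \<nu> = 0" unfolding ser_mul_def by (intro sum.neutral) auto
    thus False using \<nu> unfolding ser_supp_def by simp
  qed
  then obtain \<alpha> where \<alpha>: "\<forall>i. \<alpha> i \<le> \<nu> i" "f \<alpha> \<noteq> 0" "g (\<lambda>i. \<nu> i - \<alpha> i) \<noteq> 0" by auto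
  have "\<alpha> i \<le> D1" "\<nu> i - \<alpha> i \<le> D2" for i
    using bf bg \<alpha>(2,3) unfolding ser_supp_def mi_box_def by auto
  hence "\<nu> i \<le> D1 + D2" for i using \<alpha>(1) by (metis add_le_mono le_add_diff_inverse)
  thus "\<nu> \<in> mi_box V (D1 + D2)" using \<nu>V unfolding mi_box_def by auto
qed

lemma gauss_mul_sub:
  assumes f: "f \<in> tate absv \<rho> V" and g: "g \<in> tate absv \<rho> V"
    and p: "p \<in> tate absv \<rho> V" and q: "q \<in> tate absv \<rho> V"
  shows "gauss absv \<rho> (ser_sub (ser_mul f g) (ser_mul p q)) \<le>
    gauss absv \<rho> (ser_sub f p) * gauss absv \<rho> g + gauss absv \<rho> p * gauss absv \<rho> (ser_sub g q)"
proof -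
  have fp: "ser_sub f p \<in> tate absv \<rho> V" and gq: "ser_sub g q \<in> tate absv \<rho> V"
    using sub_tate(1) f g p q by blast+
  have a: "ser_mul (ser_sub f p) g \<in> tate absv \<rho> V" and b: "ser_mul p (ser_sub g q) \<in> tate absv \<rho> V"
    using mul_tate fp gq g p by blast+
  have "gauss absv \<rho> (ser_sub (ser_mul f g) (ser_mul p q)) \<le>
      max (gauss absv \<rho> (ser_mul (ser_sub f p) g)) (gauss absv \<rho> (ser_mul p (ser_sub g q)))"
    unfolding ser_mul_sub_expand by (rule add_tate(2)[OF a b])
  also have "\<dots> \<le> gauss absv \<rho> (ser_mul (ser_sub f p) g) + gauss absv \<rho> (ser_mul p (ser_sub g q))"
    using gauss_nonneg[OF a] gauss_nonneg[OF b] by simp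
  also have "\<dots> \<le> gauss absv \<rho> (ser_sub f p) * gauss absv \<rho> g + gauss absv \<rho> p * gauss absv \<rho> (ser_sub g q)"
    by (rule add_mono[OF gauss_mul[OF fp g] gauss_mul[OF p gq]])
  finally show ?thesis .
qed

end

context ultrametric_abs
begin

lemma tate_mono:
  assumes pos: "\<forall>i\<in>V. 0 < \<rho>' i" and V: "V \<subseteq> W" and le: "\<forall>i\<in>V. \<rho>' i \<le> \<rho> i"
  shows "tate absv \<rho> V \<subseteq> tate absv \<rho>' W"
proof
  fix f assume f: "f \<in> tate absv \<rho> V"
  have mono: "absv (f \<nu>) * mono_rad \<rho>' \<nu> \<le> absv (f \<nu>) * mono_rad \<rho> \<nu>" for \<nu>
  proof (cases "\<nu> \<in> multi_indices V")
    case True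
    hence "mono_rad \<rho>' \<nu> \<le> mono_rad \<rho> \<nu>"
      using le pos by (intro mono_rad_mono) (auto simp: multi_indices_def)
    thus ?thesis using av_nonneg by (simp add: mult_left_mono)
  qed (simp add: tate_vanish[OF f])
  show "f \<in> tate absv \<rho>' W"
  proof (rule tateI)
    fix \<nu> assume "\<nu> \<notin> multi_indices W"
    hence "\<nu> \<notin> multi_indices V" using V unfolding multi_indices_def by auto
    thus "f \<nu> = 0" by (rule tate_vanish[OF f])
  next
    fix e :: real assume "0 < e"
    hence "finite {\<nu>. e \<le> absv (f \<nu>) * mono_rad \<rho> \<nu>}" by (rule tate_finite_level[OF f])
    thus "finite {\<nu>. e \<le> absv (f \<nu>) * mono_rad \<rho>' \<nu>}"
      by (rule finite_subset[rotated]) (auto intro: order_trans mono)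
  qed
qed

lemma gauss_radius_mono:
  assumes pos: "\<forall>i. 0 < \<rho> i" and pos': "\<forall>i. 0 < \<rho>' i"
    and f: "f \<in> tate absv \<rho> V" and le: "\<forall>i\<in>V. \<rho>' i \<le> \<rho> i"
  shows "gauss absv \<rho>' f \<le> gauss absv \<rho> f"
proof -
  interpret big: tate_algebra absv \<rho> by unfold_locales (rule pos)
  interpret small: tate_algebra absv \<rho>' by unfold_locales (rule pos')
  show ?thesis
  proof (rule small.gauss_le)
    fix \<nu>
    show "absv (f \<nu>) * mono_rad \<rho>' \<nu> \<le> gauss absv \<rho> f"
    proof (cases "\<nu> \<in> multi_indices V")
      case True
      hence "mono_rad \<rho>' \<nu> \<le> mono_rad \<rho> \<nu>"
        using le pos' by (intro mono_rad_mono) (auto simp: multi_indices_def)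
      hence "absv (f \<nu>) * mono_rad \<rho>' \<nu> \<le> absv (f \<nu>) * mono_rad \<rho> \<nu>"
        using av_nonneg by (simp add: mult_left_mono)
      thus ?thesis using big.gauss_ge[OF f] by (rule order_trans)
    qed (use tate_vanish[OF f] big.gauss_nonneg[OF f] in simp)
  qed
qed

end

lemma spec_out: "y \<in> spec absv \<rho> V I \<Longrightarrow> f \<notin> tate absv \<rho> V \<Longrightarrow> y f = 0"
  unfolding spec_def by auto

lemma spec_zero: "y \<in> spec absv \<rho> V I \<Longrightarrow> y ser_zero = 0"
  unfolding spec_def by auto

lemma spec_one: "y \<in> spec absv \<rho> V I \<Longrightarrow> y ser_one = 1"
  unfolding spec_def by auto

lemma spec_nonneg: "y \<in> spec absv \<rho> V I \<Longrightarrow> 0 \<le> y f"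
  unfolding spec_def by (cases "f \<in> tate absv \<rho> V") auto

lemma spec_add:
  "y \<in> spec absv \<rho> V I \<Longrightarrow> f \<in> tate absv \<rho> V \<Longrightarrow> g \<in> tate absv \<rho> V \<Longrightarrow>
    y (ser_add f g) \<le> y f + y g"
  unfolding spec_def by auto

lemma spec_mul:
  "y \<in> spec absv \<rho> V I \<Longrightarrow> f \<in> tate absv \<rho> V \<Longrightarrow> g \<in> tate absv \<rho> V \<Longrightarrow>
    y (ser_mul f g) = y f * y g"
  unfolding spec_def by auto

lemma spec_bounded: "y \<in> spec absv \<rho> V I \<Longrightarrow> \<exists>C. \<forall>f\<in>tate absv \<rho> V. y f \<le> C * gauss absv \<rho> f"
  unfolding spec_def by auto

lemma spec_ideal: "y \<in> spec absv \<rho> V I \<Longrightarrow> f \<in> I \<Longrightarrow> y f = 0"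
  unfolding spec_def by auto

context ultrametric_abs
begin

lemma spec_le_sum_monoms:
  assumes y: "y \<in> spec absv \<rho> V I" and p: "is_poly V p"
  shows "y p \<le> (\<Sum>\<nu>\<in>ser_supp p. y (ser_monom (p \<nu>) \<nu>))"
proof -
  have fin: "finite (ser_supp p)" and sub: "ser_supp p \<subseteq> multi_indices V"
    using p unfolding is_poly_def by auto
  let ?part = "\<lambda>F \<mu>. if \<mu> \<in> F then p \<mu> else 0"
  have bound: "finite F \<Longrightarrow> F \<subseteq> ser_supp p \<Longrightarrow> y (?part F) \<le> (\<Sum>\<nu>\<in>F. y (ser_monom (p \<nu>) \<nu>))" for F
  proof (induction F rule: finite_induct)
    case empty
    have "?part {} = ser_zero" by (simp add: ser_zero_def)
    thus ?case using spec_zero[OF y] by simp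
  next
    case (insert a F)
    have split: "?part (insert a F) = ser_add (ser_monom (p a) a) (?part F)"
      using insert.hyps(2) by (auto simp: ser_add_def ser_monom_def)
    have "ser_monom (p a) a \<in> tate absv \<rho> V" using insert.prems sub by (intro monom_tate) auto
    moreover have "?part F \<in> tate absv \<rho> V"
      using insert.hyps(1) insert.prems sub
      by (intro poly_tate) (auto simp: is_poly_def ser_supp_def intro: finite_subset[of _ F])
    ultimately have "y (?part (insert a F)) \<le> y (ser_monom (p a) a) + y (?part F)"
      unfolding split by (rule spec_add[OF y])
    thus ?case using insert by simp
  qed
  have whole: "?part (ser_supp p) = p" by (auto simp: ser_supp_def)
  show ?thesis using bound[OF fin order_refl] unfolding whole .
qed

lemma spec_monom:
  assumes y: "y \<in> spec absv \<rho> V I" and fV: "finite V" and \<nu>: "\<nu> \<in> multi_indices V"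
  shows "y (ser_monom c \<nu>) = y (ser_monom c (\<lambda>_. 0)) * (\<Prod>j\<in>V. y (ser_var j) ^ \<nu> j)"
  using \<nu>
proof (induction "\<Sum>j\<in>V. \<nu> j" arbitrary: \<nu> rule: less_induct)
  case less
  show ?case
  proof (cases "\<nu> = (\<lambda>_. 0)")
    case False
    then obtain j where j: "\<nu> j \<noteq> 0" by auto
    have jV: "j \<in> V" using less.prems j unfolding multi_indices_def by auto
    define \<nu>' where "\<nu>' = \<nu>(j := \<nu> j - 1)"
    have \<nu>': "\<nu>' \<in> multi_indices V" unfolding \<nu>'_def by (rule multi_indices_le[OF less.prems]) simp
    have "(\<Sum>i\<in>V. \<nu>' i) = \<nu>' j + (\<Sum>i\<in>V - {j}. \<nu> i)"
      using fV jV unfolding \<nu>'_def by (simp add: sum.remove)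
    moreover have "(\<Sum>i\<in>V. \<nu> i) = \<nu> j + (\<Sum>i\<in>V - {j}. \<nu> i)" using fV jV by (rule sum.remove)
    ultimately have smaller: "(\<Sum>i\<in>V. \<nu>' i) < (\<Sum>i\<in>V. \<nu> i)" using j unfolding \<nu>'_def by simp
    have "y (ser_monom c \<nu>) = y (ser_monom c \<nu>') * y (ser_var j)"
      unfolding ser_monom_step[OF multi_indices_finite[OF less.prems] j] \<nu>'_def[symmetric]
      by (rule spec_mul[OF y monom_tate[OF \<nu>'] var_tate[OF jV]])
    also have "\<dots> = y (ser_monom c (\<lambda>_. 0)) * (\<Prod>i\<in>V. y (ser_var i) ^ \<nu> i)"
      using less.hyps[OF smaller \<nu>'] prod_power_step[where a = "\<lambda>i. y (ser_var i)" and \<nu> = \<nu>, OF fV jV j]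
      unfolding \<nu>'_def by (simp add: mult.assoc)
    finally show ?thesis .
  qed simp
qed

lemma spec_monom_le:
  assumes y: "y \<in> spec absv \<rho> V I" and fV: "finite V" and unit: "\<forall>j\<in>V. y (ser_var j) \<le> 1"
    and \<nu>: "\<nu> \<in> multi_indices V"
  shows "y (ser_monom c \<nu>) \<le> y (ser_monom c (\<lambda>_. 0))"
proof -
  have "(\<Prod>j\<in>V. y (ser_var j) ^ \<nu> j) \<le> 1"
    using unit spec_nonneg[OF y] by (intro prod_le_1) (auto intro: power_le_one)
  thus ?thesis unfolding spec_monom[OF y fV \<nu>]
    using spec_nonneg[OF y] by (simp add: mult_left_le)
qed

end

context tate_algebra
begin

text \<open>A point of M(A_rho/I) satisfies |T_j| <= rho_j, by the n-th root trick applied to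
  y(T_j)^n = y(T_j^n) <= C rho_j^n.\<close>
lemma spec_var_le_radius:
  assumes y: "y \<in> spec absv \<rho> V I" and fV: "finite V" and j: "j \<in> V"
  shows "y (ser_var j) \<le> \<rho> j"
proof -
  obtain C where C: "\<forall>f\<in>tate absv \<rho> V. y f \<le> C * gauss absv \<rho> f" using spec_bounded[OF y] by blast
  have "y (ser_var j) ^ n \<le> C * (real n + 1) ^ 0 * \<rho> j ^ n" for n
  proof -
    let ?\<nu> = "\<lambda>i. if i = j then n else 0"
    have \<nu>: "?\<nu> \<in> multi_indices V" by (rule multi_indices_unit[OF j])
    have prod: "(\<Prod>i\<in>V. y (ser_var i) ^ ?\<nu> i) = y (ser_var j) ^ n"
      using fV j by (simp add: prod.remove)
    have "y (ser_var j) ^ n = y (ser_monom 1 ?\<nu>)"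
      using spec_monom[OF y fV \<nu>, of 1] spec_one[OF y] prod by (simp add: ser_one_monom)
    also have "\<dots> \<le> C * gauss absv \<rho> (ser_monom 1 ?\<nu>)" using C monom_tate[OF \<nu>] by blast
    also have "gauss absv \<rho> (ser_monom 1 ?\<nu>) = \<rho> j ^ n"
    proof -
      have "mono_rad \<rho> ?\<nu> = (\<Prod>i\<in>{j}. \<rho> i ^ ?\<nu> i)" by (rule mono_rad_eq_prod) auto
      thus ?thesis using gauss_monom[OF \<nu>] by simp
    qed
    finally show ?thesis by simp
  qed
  thus ?thesis using le_of_power_bound[OF spec_nonneg[OF y]] radius_pos less_imp_le by blast
qed

lemma spec_diff_le:
  assumes y: "y \<in> spec absv \<rho> V I" and f: "f \<in> tate absv \<rho> V" and g: "g \<in> tate absv \<rho> V"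
  shows "y f - y g \<le> y (ser_sub f g)"
proof -
  have "y f = y (ser_add g (ser_sub f g))" by (simp add: ser_add_def ser_sub_def)
  also have "\<dots> \<le> y g + y (ser_sub f g)" by (rule spec_add[OF y g sub_tate(1)[OF f g]])
  finally show ?thesis by simp
qed

end

section \<open>The spectral bound for unit points\<close>

locale unit_point = ultrametric_abs +
  fixes \<rho> \<rho>' :: "nat \<Rightarrow> real" and V :: "nat set" and I :: "'k::field series set" and y
  assumes big_pos: "\<forall>i. 0 < \<rho> i" and small_ge_1: "\<forall>i. 1 \<le> \<rho>' i"
    and small_le_big: "\<forall>i\<in>V. \<rho>' i \<le> \<rho> i"
    and finite_vars: "finite V" and point: "y \<in> spec absv \<rho> V I"
    and unit: "\<forall>j\<in>V. y (ser_var j) \<le> 1"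
begin

sublocale big: tate_algebra absv \<rho> by unfold_locales (rule big_pos)

sublocale small: tate_algebra absv \<rho>'
  by unfold_locales (use small_ge_1 in \<open>auto intro: less_le_trans[OF zero_less_one]\<close>)

lemma tate_big_small: "tate absv \<rho> V \<subseteq> tate absv \<rho>' V"
  by (rule tate_mono) (use small.radius_pos small_le_big in auto)

lemma point_bounded: "\<exists>C. 0 \<le> C \<and> (\<forall>f\<in>tate absv \<rho> V. y f \<le> C * gauss absv \<rho> f)"
proof -
  obtain C where C: "\<forall>f\<in>tate absv \<rho> V. y f \<le> C * gauss absv \<rho> f" using spec_bounded[OF point] by blast
  have "1 \<le> C" using C one_tate spec_one[OF point] big.gauss_one by force
  thus ?thesis using C by (intro exI[of _ C]) simp
qed

text \<open>A crude bound: y(p) is at most a constant times the number of monomials of p times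
  |p|_rho'; it uses that monomials are dominated by their coefficients on the unit polydisc.\<close>
lemma point_le_card_gauss:
  assumes C: "0 \<le> C" "\<forall>f\<in>tate absv \<rho> V. y f \<le> C * gauss absv \<rho> f" and p: "is_poly V p"
  shows "y p \<le> C * real (card (ser_supp p)) * gauss absv \<rho>' p"
proof -
  have sub: "ser_supp p \<subseteq> multi_indices V" using p unfolding is_poly_def by auto
  have "y p \<le> (\<Sum>\<nu>\<in>ser_supp p. y (ser_monom (p \<nu>) \<nu>))" by (rule spec_le_sum_monoms[OF point p])
  also have "\<dots> \<le> (\<Sum>\<nu>\<in>ser_supp p. C * gauss absv \<rho>' p)"
  proof (rule sum_mono)
    fix \<nu> assume \<nu>: "\<nu> \<in> ser_supp p"
    have "y (ser_monom (p \<nu>) \<nu>) \<le> y (ser_monom (p \<nu>) (\<lambda>_. 0))"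
      using spec_monom_le[OF point finite_vars unit] \<nu> sub by blast
    also have "\<dots> \<le> C * gauss absv \<rho> (ser_monom (p \<nu>) (\<lambda>_. 0))"
      using C(2) monom_tate[OF multi_indices_zero] by blast
    also have "gauss absv \<rho> (ser_monom (p \<nu>) (\<lambda>_. 0)) = absv (p \<nu>)"
      using big.gauss_monom[OF multi_indices_zero] by (simp add: mono_rad_def)
    also have "absv (p \<nu>) \<le> absv (p \<nu>) * mono_rad \<rho>' \<nu>"
      using mono_rad_ge_1[OF small_ge_1, of \<nu>] av_nonneg[of "p \<nu>"] by (simp add: mult_le_cancel_left1)
    also have "\<dots> \<le> gauss absv \<rho>' p" by (rule small.gauss_ge[OF poly_tate[OF p]])
    finally show "y (ser_monom (p \<nu>) \<nu>) \<le> C * gauss absv \<rho>' p" using C(1) by (simp add: mult_left_mono)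
  qed
  also have "\<dots> = C * real (card (ser_supp p)) * gauss absv \<rho>' p" by simp
  finally show ?thesis .
qed

lemma ser_pow_supp:
  fixes p :: "'k series"
  assumes "ser_supp p \<subseteq> mi_box V D"
  shows "ser_supp (ser_pow p n) \<subseteq> mi_box V (n * D)"
proof (induction n)
  case 0
  have "ser_supp (ser_pow p 0) \<subseteq> {\<lambda>_. 0}" by (auto simp: ser_pow_def ser_one_def ser_supp_def)
  thus ?case using multi_indices_zero[of V] by (auto simp: mi_box_def)
next
  case (Suc n)
  have "ser_supp (ser_mul p (ser_pow p n)) \<subseteq> mi_box V (D + n * D)"
    by (rule big.mul_supp_mi_box[OF poly_tate[OF mi_box_poly[OF finite_vars assms]]
          poly_tate[OF mi_box_poly[OF finite_vars Suc.IH]] assms Suc.IH])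
  thus ?case by (simp add: ser_pow_def)
qed

lemma ser_pow_poly: "ser_supp (p :: 'k series) \<subseteq> mi_box V D \<Longrightarrow> is_poly V (ser_pow p n)"
  by (rule mi_box_poly[OF finite_vars ser_pow_supp])

lemma point_ser_pow:
  assumes D: "ser_supp p \<subseteq> mi_box V D"
  shows "y (ser_pow p n) = y p ^ n"
proof (induction n)
  case 0 thus ?case using spec_one[OF point] by (simp add: ser_pow_def)
next
  case (Suc n)
  have "y (ser_mul p (ser_pow p n)) = y p * y (ser_pow p n)"
    by (rule spec_mul[OF point poly_tate[OF mi_box_poly[OF finite_vars D]] poly_tate[OF ser_pow_poly[OF D]]])
  thus ?case using Suc by (simp add: ser_pow_def)
qed

lemma gauss_ser_pow:
  assumes D: "ser_supp p \<subseteq> mi_box V D"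
  shows "gauss absv \<rho>' (ser_pow p n) \<le> gauss absv \<rho>' p ^ n"
proof (induction n)
  case 0 thus ?case using small.gauss_one by (simp add: ser_pow_def)
next
  case (Suc n)
  have p: "p \<in> tate absv \<rho>' V" by (rule poly_tate[OF mi_box_poly[OF finite_vars D]])
  have pn: "ser_pow p n \<in> tate absv \<rho>' V" by (rule poly_tate[OF ser_pow_poly[OF D]])
  have "gauss absv \<rho>' (ser_mul p (ser_pow p n)) \<le> gauss absv \<rho>' p * gauss absv \<rho>' (ser_pow p n)"
    by (rule small.gauss_mul[OF p pn])
  also have "\<dots> \<le> gauss absv \<rho>' p * gauss absv \<rho>' p ^ n"
    using Suc small.gauss_nonneg[OF p] by (intro mult_left_mono)
  finally show ?case by (simp add: ser_pow_def)
qed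

text \<open>The spectral bound: y(p) <= |p|_rho' for every polynomial p.  Apply the crude bound to
  p^n, whose support has polynomially many monomials, and take n-th roots.\<close>
lemma spectral_bound:
  assumes p: "is_poly V p"
  shows "y p \<le> gauss absv \<rho>' p"
proof -
  obtain C where C: "0 \<le> C" "\<forall>f\<in>tate absv \<rho> V. y f \<le> C * gauss absv \<rho> f" using point_bounded by blast
  obtain D where D: "ser_supp p \<subseteq> mi_box V D" using poly_mi_box[OF p] by blast
  let ?G = "gauss absv \<rho>' p" and ?c = "card V"
  have "y p ^ n \<le> (C * (real D + 1) ^ ?c) * (real n + 1) ^ ?c * ?G ^ n" for n
  proof -
    have "card (ser_supp (ser_pow p n)) \<le> card (mi_box V (n * D))"
      by (rule card_mono[OF mi_box_finite[OF finite_vars] ser_pow_supp[OF D]])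
    also have "\<dots> \<le> (n * D + 1) ^ ?c" by (rule mi_box_card[OF finite_vars])
    finally have "real (card (ser_supp (ser_pow p n))) \<le> (real n * real D + 1) ^ ?c"
      by (metis of_nat_1 of_nat_add of_nat_le_iff of_nat_mult of_nat_power)
    also have "\<dots> \<le> ((real D + 1) * (real n + 1)) ^ ?c"
      by (rule power_mono) (simp_all add: algebra_simps)
    finally have card: "real (card (ser_supp (ser_pow p n))) \<le> (real D + 1) ^ ?c * (real n + 1) ^ ?c"
      by (simp add: power_mult_distrib)
    have "y p ^ n = y (ser_pow p n)" using point_ser_pow[OF D] by simp
    also have "\<dots> \<le> C * real (card (ser_supp (ser_pow p n))) * gauss absv \<rho>' (ser_pow p n)"
      by (rule point_le_card_gauss[OF C ser_pow_poly[OF D]])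
    also have "\<dots> \<le> C * ((real D + 1) ^ ?c * (real n + 1) ^ ?c) * ?G ^ n"
      using card C(1) gauss_ser_pow[OF D] small.gauss_nonneg[OF poly_tate[OF ser_pow_poly[OF D]]]
      by (intro mult_mono mult_left_mono) auto
    finally show ?thesis by (simp add: mult_ac)
  qed
  thus ?thesis
    using le_of_power_bound[OF spec_nonneg[OF point] small.gauss_nonneg[OF poly_tate[OF p]]] by blast
qed

lemma point_lipschitz:
  assumes p: "is_poly V p" and q: "is_poly V q"
  shows "\<bar>y p - y q\<bar> \<le> gauss absv \<rho>' (ser_sub p q)"
proof -
  have "y p - y q \<le> gauss absv \<rho>' (ser_sub p q)" if p: "is_poly V p" and q: "is_poly V q" for p q
    using big.spec_diff_le[OF point poly_tate[OF p] poly_tate[OF q]] spectral_bound[OF sub_poly[OF p q]]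
    by simp
  from this[OF p q] this[OF q p] show ?thesis
    using small.gauss_sub_commute[of q p] by (simp add: abs_le_iff)
qed

end

section \<open>Extending unit points by continuity\<close>

context unit_point
begin

definition ext_point :: "'k series \<Rightarrow> real" where
  "ext_point f = (if f \<in> tate absv \<rho>' V then lim (\<lambda>M. y (ser_trunc M f)) else 0)"

abbreviation tail :: "nat \<Rightarrow> 'k series \<Rightarrow> real" where
  "tail M f \<equiv> gauss absv \<rho>' (ser_sub f (ser_trunc M f))"

lemma tail_tendsto: "f \<in> tate absv \<rho>' V \<Longrightarrow> (\<lambda>M. tail M f) \<longlonglongrightarrow> 0"
  by (rule small.trunc_tendsto[OF _ finite_vars])

lemma tail_tate: "f \<in> tate absv \<rho>' V \<Longrightarrow> ser_sub f (ser_trunc M f) \<in> tate absv \<rho>' V"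
  by (rule small.sub_tate(1)[OF _ poly_tate[OF trunc_poly[OF finite_vars]]])

lemma tail_nonneg: "f \<in> tate absv \<rho>' V \<Longrightarrow> 0 \<le> tail M f"
  by (rule small.gauss_nonneg[OF tail_tate])

lemma trunc_dist:
  assumes f: "f \<in> tate absv \<rho>' V"
  shows "\<bar>y (ser_trunc N f) - y (ser_trunc M f)\<bar> \<le> max (tail M f) (tail N f)"
proof -
  have "\<bar>y (ser_trunc N f) - y (ser_trunc M f)\<bar> \<le>
      gauss absv \<rho>' (ser_sub (ser_trunc N f) (ser_trunc M f))"
    by (rule point_lipschitz[OF trunc_poly[OF finite_vars f] trunc_poly[OF finite_vars f]])
  also have "ser_sub (ser_trunc N f) (ser_trunc M f) =
      ser_sub (ser_sub f (ser_trunc M f)) (ser_sub f (ser_trunc N f))"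
    by (simp add: ser_sub_def fun_eq_iff)
  also have "gauss absv \<rho>' \<dots> \<le> max (tail M f) (tail N f)"
    by (rule small.sub_tate(2)[OF tail_tate[OF f] tail_tate[OF f]])
  finally show ?thesis .
qed

lemma ext_point_tendsto:
  assumes f: "f \<in> tate absv \<rho>' V"
  shows "(\<lambda>M. y (ser_trunc M f)) \<longlonglongrightarrow> ext_point f"
proof -
  have "Cauchy (\<lambda>M. y (ser_trunc M f))"
  proof (rule CauchyI)
    fix e :: real assume e: "0 < e"
    obtain M0 where M0: "\<forall>M\<ge>M0. norm (tail M f - 0) < e"
      using LIMSEQ_D[OF tail_tendsto[OF f] e] by blast
    have "norm (y (ser_trunc m f) - y (ser_trunc n f)) < e" if "M0 \<le> m" "M0 \<le> n" for m n
    proof -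
      have "tail m f < e" "tail n f < e" using M0 that tail_nonneg[OF f] by auto
      thus ?thesis using trunc_dist[OF f, of m n] by simp
    qed
    thus "\<exists>M. \<forall>m\<ge>M. \<forall>n\<ge>M. norm (y (ser_trunc m f) - y (ser_trunc n f)) < e" by blast
  qed
  thus ?thesis using f by (simp add: ext_point_def Cauchy_convergent_iff convergent_LIMSEQ_iff)
qed

lemma ext_point_approx:
  assumes f: "f \<in> tate absv \<rho>' V" and p: "is_poly V p"
  shows "\<bar>ext_point f - y p\<bar> \<le> gauss absv \<rho>' (ser_sub f p)"
proof -
  let ?g = "gauss absv \<rho>' (ser_sub f p)"
  have fp: "ser_sub f p \<in> tate absv \<rho>' V" by (rule small.sub_tate(1)[OF f poly_tate[OF p]])
  have "\<bar>y (ser_trunc M f) - y p\<bar> \<le> max ?g (tail M f)" for M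
  proof -
    have "\<bar>y (ser_trunc M f) - y p\<bar> \<le> gauss absv \<rho>' (ser_sub (ser_trunc M f) p)"
      by (rule point_lipschitz[OF trunc_poly[OF finite_vars f] p])
    also have "ser_sub (ser_trunc M f) p = ser_sub (ser_sub f p) (ser_sub f (ser_trunc M f))"
      by (simp add: ser_sub_def fun_eq_iff)
    also have "gauss absv \<rho>' \<dots> \<le> max ?g (tail M f)"
      by (rule small.sub_tate(2)[OF fp tail_tate[OF f]])
    finally show ?thesis .
  qed
  moreover have "(\<lambda>M. \<bar>y (ser_trunc M f) - y p\<bar>) \<longlonglongrightarrow> \<bar>ext_point f - y p\<bar>"
    by (intro tendsto_rabs tendsto_diff ext_point_tendsto[OF f] tendsto_const)
  moreover have "(\<lambda>M. max ?g (tail M f)) \<longlonglongrightarrow> max ?g 0"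
    by (intro tendsto_max tendsto_const tail_tendsto[OF f])
  ultimately have "\<bar>ext_point f - y p\<bar> \<le> max ?g 0" by (intro LIMSEQ_le) auto
  thus ?thesis using small.gauss_nonneg[OF fp] by simp
qed

text \<open>On A_rho the extension is y itself, since y is continuous for the Gauss norm of rho.\<close>
lemma ext_point_agrees:
  assumes f: "f \<in> tate absv \<rho> V"
  shows "ext_point f = y f"
proof -
  obtain C where C: "0 \<le> C" "\<forall>f\<in>tate absv \<rho> V. y f \<le> C * gauss absv \<rho> f" using point_bounded by blast
  let ?tail = "\<lambda>M. gauss absv \<rho> (ser_sub f (ser_trunc M f))"
  have "\<bar>y (ser_trunc M f) - y f\<bar> \<le> C * ?tail M" for M
  proof -
    have t: "ser_trunc M f \<in> tate absv \<rho> V" by (rule poly_tate[OF trunc_poly[OF finite_vars f]])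
    have "y f - y (ser_trunc M f) \<le> C * ?tail M"
      using big.spec_diff_le[OF point f t] C(2) big.sub_tate(1)[OF f t] by fastforce
    moreover have "y (ser_trunc M f) - y f \<le> C * ?tail M"
      using big.spec_diff_le[OF point t f] C(2) big.sub_tate(1)[OF t f]
        big.gauss_sub_commute[of "ser_trunc M f" f] by fastforce
    ultimately show ?thesis by (simp add: abs_le_iff)
  qed
  moreover have "(\<lambda>M. C * ?tail M) \<longlonglongrightarrow> 0"
    using tendsto_mult[OF tendsto_const big.trunc_tendsto[OF f finite_vars], of C] by simp
  ultimately have "(\<lambda>M. y (ser_trunc M f)) \<longlonglongrightarrow> y f" by (rule tendsto_by_dist_bound)
  thus ?thesis using LIMSEQ_unique ext_point_tendsto tate_big_small f by blast
qed

text \<open>Subadditivity passes to the limit, since truncation commutes with addition.\<close>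
lemma ext_point_add:
  assumes f: "f \<in> tate absv \<rho>' V" and g: "g \<in> tate absv \<rho>' V"
  shows "ext_point (ser_add f g) \<le> ext_point f + ext_point g"
proof (rule LIMSEQ_le[OF ext_point_tendsto[OF small.add_tate(1)[OF f g]]
      tendsto_add[OF ext_point_tendsto[OF f] ext_point_tendsto[OF g]]])
  have "y (ser_trunc M (ser_add f g)) \<le> y (ser_trunc M f) + y (ser_trunc M g)" for M
  proof -
    have "ser_trunc M (ser_add f g) = ser_add (ser_trunc M f) (ser_trunc M g)"
      by (simp add: ser_trunc_def ser_add_def fun_eq_iff)
    thus ?thesis
      using spec_add[OF point poly_tate[OF trunc_poly[OF finite_vars f]] poly_tate[OF trunc_poly[OF finite_vars g]]]
      by simp
  qed
  thus "\<exists>N. \<forall>M\<ge>N. y (ser_trunc M (ser_add f g)) \<le> y (ser_trunc M f) + y (ser_trunc M g)" by blast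
qed

text \<open>Multiplicativity: y(t_M f * t_M g) tends both to ext(f) ext(g) and, by continuity of
  multiplication and the approximation bound, to ext(fg).\<close>
lemma ext_point_mul:
  assumes f: "f \<in> tate absv \<rho>' V" and g: "g \<in> tate absv \<rho>' V"
  shows "ext_point (ser_mul f g) = ext_point f * ext_point g"
proof -
  let ?p = "\<lambda>M. ser_mul (ser_trunc M f) (ser_trunc M g)"
  have tf: "ser_trunc M f \<in> tate absv \<rho>' V" and tg: "ser_trunc M g \<in> tate absv \<rho>' V" for M
    using poly_tate trunc_poly[OF finite_vars] f g by blast+
  have p_poly: "is_poly V (?p M)" for M
    by (rule mi_box_poly[OF finite_vars small.mul_supp_mi_box[OF tf tg trunc_supp[OF f] trunc_supp[OF g]]])
  have "y (?p M) = y (ser_trunc M f) * y (ser_trunc M g)" for M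
    by (rule spec_mul[OF point]) (use poly_tate trunc_poly[OF finite_vars] f g in blast)+
  hence to_product: "(\<lambda>M. y (?p M)) \<longlonglongrightarrow> ext_point f * ext_point g"
    by (simp add: tendsto_mult ext_point_tendsto f g)
  let ?F = "gauss absv \<rho>' f" and ?G = "gauss absv \<rho>' g"
  have dist: "\<bar>y (?p M) - ext_point (ser_mul f g)\<bar> \<le> tail M f * ?G + ?F * tail M g" for M
  proof -
    have "\<bar>y (?p M) - ext_point (ser_mul f g)\<bar> \<le> gauss absv \<rho>' (ser_sub (ser_mul f g) (?p M))"
      using ext_point_approx[OF small.mul_tate[OF f g] p_poly] by (simp add: abs_minus_commute)
    also have "\<dots> \<le> tail M f * ?G + gauss absv \<rho>' (ser_trunc M f) * tail M g"
      by (rule small.gauss_mul_sub[OF f g tf tg])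
    also have "\<dots> \<le> tail M f * ?G + ?F * tail M g"
      using small.gauss_trunc_le[OF f] tail_nonneg[OF g] by (simp add: mult_right_mono)
    finally show ?thesis .
  qed
  have "(\<lambda>M. tail M f * ?G + ?F * tail M g) \<longlonglongrightarrow> 0 * ?G + ?F * 0"
    by (intro tendsto_add tendsto_mult tendsto_const tail_tendsto f g)
  hence "(\<lambda>M. y (?p M)) \<longlonglongrightarrow> ext_point (ser_mul f g)"
    using tendsto_by_dist_bound[OF dist] by simp
  thus ?thesis using to_product LIMSEQ_unique by blast
qed

lemma ext_point_le_gauss:
  assumes f: "f \<in> tate absv \<rho>' V"
  shows "ext_point f \<le> gauss absv \<rho>' f"
proof (rule LIMSEQ_le_const2[OF ext_point_tendsto[OF f]], intro exI allI impI)
  fix M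
  have "y (ser_trunc M f) \<le> gauss absv \<rho>' (ser_trunc M f)"
    by (rule spectral_bound[OF trunc_poly[OF finite_vars f]])
  also have "\<dots> \<le> gauss absv \<rho>' f" by (rule small.gauss_trunc_le[OF f])
  finally show "y (ser_trunc M f) \<le> gauss absv \<rho>' f" .
qed

lemma ext_point_spec:
  assumes I: "I \<subseteq> tate absv \<rho> V"
  shows "ext_point \<in> spec absv \<rho>' V I"
  unfolding spec_def
proof (intro CollectI conjI allI impI ballI)
  show "ext_point ser_zero = 0" using ext_point_agrees[OF zero_tate] spec_zero[OF point] by simp
  show "ext_point ser_one = 1" using ext_point_agrees[OF one_tate] spec_one[OF point] by simp
  show "\<exists>C. \<forall>f\<in>tate absv \<rho>' V. ext_point f \<le> C * gauss absv \<rho>' f"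
    using ext_point_le_gauss by (intro exI[of _ 1]) simp
  fix f assume "f \<notin> tate absv \<rho>' V" thus "ext_point f = 0" by (simp add: ext_point_def)
next
  fix f assume "f \<in> tate absv \<rho>' V"
  thus "0 \<le> ext_point f" by (rule LIMSEQ_le_const[OF ext_point_tendsto]) (use spec_nonneg[OF point] in blast)
next
  fix f g assume "f \<in> tate absv \<rho>' V" "g \<in> tate absv \<rho>' V"
  thus "ext_point (ser_add f g) \<le> ext_point f + ext_point g"
    and "ext_point (ser_mul f g) = ext_point f * ext_point g"
    by (rule ext_point_add, rule ext_point_mul)
next
  fix f assume "f \<in> I"
  thus "ext_point f = 0" using ext_point_agrees spec_ideal[OF point] I by auto
qed

end

definition unit_coords :: "nat \<Rightarrow> nat \<Rightarrow> ('k::field series \<Rightarrow> real) set" where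
  "unit_coords a b = {x. \<forall>j\<in>{a..<b}. x (ser_var j) \<le> 1}"

lemma unit_coords_split: "a \<le> b \<Longrightarrow> b \<le> c \<Longrightarrow> unit_coords a b \<inter> unit_coords b c = unit_coords a c"
  unfolding unit_coords_def by auto

lemma restr_restr:
  "tate absv \<rho>a {..<a} \<subseteq> tate absv \<rho>b {..<b} \<Longrightarrow>
    restr absv \<rho>a a (restr absv \<rho>b b x) = restr absv \<rho>a a x"
  unfolding restr_def by (auto simp: fun_eq_iff)

lemma semianalytic_subset: "A \<in> semianalytic_sets P F \<Longrightarrow> A \<subseteq> P"
  by (induction rule: semianalytic_sets.induct) auto

lemma semianalytic_pullback:
  assumes A: "A \<in> semianalytic_sets P F" and maps: "\<forall>x\<in>Q. \<phi> x \<in> P" and FG: "F \<subseteq> G"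
    and agree: "\<forall>x\<in>Q. \<forall>f\<in>F. \<phi> x f = x f"
  shows "{x\<in>Q. \<phi> x \<in> A} \<in> semianalytic_sets Q G"
  using A
proof (induction rule: semianalytic_sets.induct)
  case (basic f g)
  have "{x\<in>Q. \<phi> x \<in> {z\<in>P. z f \<le> z g}} = {x\<in>Q. x f \<le> x g}" using maps agree basic by auto
  moreover have "{x\<in>Q. x f \<le> x g} \<in> semianalytic_sets Q G"
    using basic FG by (intro semianalytic_sets.basic) auto
  ultimately show ?case by simp
next
  case (compl A)
  have "{x\<in>Q. \<phi> x \<in> P - A} = Q - {x\<in>Q. \<phi> x \<in> A}" using maps by auto
  thus ?case using semianalytic_sets.compl[OF compl.IH] by simp
next
  case (union A B)
  have "{x\<in>Q. \<phi> x \<in> A \<union> B} = {x\<in>Q. \<phi> x \<in> A} \<union> {x\<in>Q. \<phi> x \<in> B}" by auto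
  thus ?case using semianalytic_sets.union[OF union.IH] by simp
qed

context ultrametric_abs
begin

lemma restr_var: "j < N \<Longrightarrow> restr absv \<rho> N x (ser_var j) = x (ser_var j)"
  unfolding restr_def using var_tate[of j "{..<N}"] by simp

lemma restr_spec:
  assumes pos: "\<forall>i. 0 < \<rho> i" and pos': "\<forall>i. 0 < \<rho>' i" and le: "\<forall>i<N. \<rho>' i \<le> \<rho> i"
    and x: "x \<in> spec absv \<rho>' {..<N} I"
  shows "restr absv \<rho> N x \<in> spec absv \<rho> {..<N} I"
proof -
  interpret big: tate_algebra absv \<rho> by unfold_locales (rule pos)
  interpret small: tate_algebra absv \<rho>' by unfold_locales (rule pos')
  have incl: "tate absv \<rho> {..<N} \<subseteq> tate absv \<rho>' {..<N}" by (rule tate_mono) (use pos' le in auto)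
  obtain C where C: "\<forall>f\<in>tate absv \<rho>' {..<N}. x f \<le> C * gauss absv \<rho>' f"
    using spec_bounded[OF x] by blast
  have C1: "1 \<le> C" using C one_tate spec_one[OF x] small.gauss_one by force
  have bound: "x f \<le> C * gauss absv \<rho> f" if f: "f \<in> tate absv \<rho> {..<N}" for f
  proof -
    have "x f \<le> C * gauss absv \<rho>' f" using C f incl by blast
    also have "\<dots> \<le> C * gauss absv \<rho> f"
      using gauss_radius_mono[OF pos pos' f] le C1 by (intro mult_left_mono) auto
    finally show ?thesis .
  qed
  show ?thesis unfolding spec_def restr_def
    using spec_zero[OF x] spec_one[OF x] spec_nonneg[OF x] spec_add[OF x] spec_mul[OF x]
      spec_ideal[OF x] one_tate zero_tate big.add_tate(1) big.mul_tate incl bound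
    by (auto 0 3 intro!: exI[of _ C] simp: subset_iff)
qed

lemma unit_points_restr:
  assumes pos: "\<forall>i. 0 < \<rho> i" and ge_1: "\<forall>i. 1 \<le> \<rho>' i" and le: "\<forall>i<N. \<rho>' i \<le> \<rho> i"
    and I: "I \<subseteq> tate absv \<rho> {..<N}"
  shows "restr absv \<rho> N ` (spec absv \<rho>' {..<N} I \<inter> unit_coords 0 N) =
    spec absv \<rho> {..<N} I \<inter> unit_coords 0 N"
proof (intro equalityI subsetI)
  fix z assume "z \<in> restr absv \<rho> N ` (spec absv \<rho>' {..<N} I \<inter> unit_coords 0 N)"
  then obtain x where x: "x \<in> spec absv \<rho>' {..<N} I" "x \<in> unit_coords 0 N" and z: "z = restr absv \<rho> N x"
    by blast
  have "z \<in> spec absv \<rho> {..<N} I"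
    unfolding z by (rule restr_spec[OF pos _ le x(1)]) (use ge_1 in \<open>auto intro: less_le_trans[OF zero_less_one]\<close>)
  moreover have "z \<in> unit_coords 0 N" using x(2) restr_var unfolding z unit_coords_def by auto
  ultimately show "z \<in> spec absv \<rho> {..<N} I \<inter> unit_coords 0 N" by blast
next
  fix y assume y: "y \<in> spec absv \<rho> {..<N} I \<inter> unit_coords 0 N"
  interpret unit_point absv \<rho> \<rho>' "{..<N}" I y
    by unfold_locales (use pos ge_1 le y in \<open>auto simp: unit_coords_def\<close>)
  have "ext_point \<in> spec absv \<rho>' {..<N} I \<inter> unit_coords 0 N"
    using ext_point_spec[OF I] ext_point_agrees[OF var_tate] unit unfolding unit_coords_def by auto
  moreover have "restr absv \<rho> N ext_point = y"
    using ext_point_agrees spec_out[OF point] unfolding restr_def by auto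
  ultimately show "y \<in> restr absv \<rho> N ` (spec absv \<rho>' {..<N} I \<inter> unit_coords 0 N)" by (metis imageI)
qed

lemma semianalytic_change_radius:
  assumes pos: "\<forall>i. 0 < \<rho> i" and ge_1: "\<forall>i. 1 \<le> \<rho>' i" and le: "\<forall>i<N. \<rho>' i \<le> \<rho> i"
    and I: "I \<subseteq> tate absv \<rho> {..<N}" and T: "semianalytic absv \<rho> N I T"
  shows "\<exists>T'. semianalytic absv \<rho>' N I T' \<and>
    restr absv \<rho> N ` (T' \<inter> unit_coords 0 N) = T \<inter> unit_coords 0 N"
proof (intro exI conjI)
  let ?P = "spec absv \<rho> {..<N} I" and ?P' = "spec absv \<rho>' {..<N} I"
  let ?T' = "{x\<in>?P'. restr absv \<rho> N x \<in> T}"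
  have T: "T \<in> semianalytic_sets ?P (tate absv \<rho> {..<N})" using T unfolding semianalytic_def .
  have pos': "\<forall>i. 0 < \<rho>' i" using ge_1 by (auto intro: less_le_trans[OF zero_less_one])
  show "semianalytic absv \<rho>' N I ?T'"
    unfolding semianalytic_def
  proof (rule semianalytic_pullback[OF T])
    show "\<forall>x\<in>?P'. restr absv \<rho> N x \<in> ?P" using restr_spec[OF pos pos' le] by blast
    show "tate absv \<rho> {..<N} \<subseteq> tate absv \<rho>' {..<N}" by (rule tate_mono) (use pos' le in auto)
  qed (simp add: restr_def)
  have "restr absv \<rho> N ` (?T' \<inter> unit_coords 0 N) = T \<inter> restr absv \<rho> N ` (?P' \<inter> unit_coords 0 N)"
    by blast
  also have "\<dots> = T \<inter> unit_coords 0 N"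
    using unit_points_restr[OF pos ge_1 le I] semianalytic_subset[OF T] by blast
  finally show "restr absv \<rho> N ` (?T' \<inter> unit_coords 0 N) = T \<inter> unit_coords 0 N" .
qed

end

lemma common_lower_radius:
  fixes s :: real and r :: "nat \<Rightarrow> real"
  assumes "1 < s" and "\<forall>i<n. 1 < r i"
  obtains s' where "1 < s'" and "s' \<le> s" and "\<forall>i<n. s' \<le> r i"
proof
  let ?s' = "Min (insert s (r ` {..<n}))"
  show "1 < ?s'" using assms by (subst Min_gr_iff) auto
  show "?s' \<le> s" and "\<forall>i<n. ?s' \<le> r i" by (auto intro: Min_le)
qed

context ultrametric_abs
begin

lemma spec_unit_coords_from:
  assumes pos: "\<forall>i. 0 < \<rho> i" and small: "\<forall>j<a. \<rho> j \<le> 1"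
  shows "spec absv \<rho> {..<N} I \<inter> unit_coords a N = spec absv \<rho> {..<N} I \<inter> unit_coords 0 N"
proof -
  interpret tate_algebra absv \<rho> by unfold_locales (rule pos)
  have "x (ser_var j) \<le> 1" if "x \<in> spec absv \<rho> {..<N} I" "j < N" "j < a" for x j
    using spec_var_le_radius[OF that(1) _, of j] small that(2,3) by force
  thus ?thesis unfolding unit_coords_def by (auto simp: not_le)
qed

lemma restr_image_unit_coords:
  assumes incl: "tate absv \<rho>a {..<a} \<subseteq> tate absv \<rho>b {..<b}" and "a \<le> b" and "b \<le> c"
  shows "restr absv \<rho>a a ` (restr absv \<rho>b b ` (T \<inter> unit_coords b c) \<inter> unit_coords a b) =
    restr absv \<rho>a a ` (T \<inter> unit_coords a c)"
proof -
  have "x \<in> unit_coords a b \<longleftrightarrow> restr absv \<rho>b b x \<in> unit_coords a b" for x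
    using restr_var[of _ b \<rho>b x] unfolding unit_coords_def by auto
  hence "restr absv \<rho>b b ` (T \<inter> unit_coords b c) \<inter> unit_coords a b =
      restr absv \<rho>b b ` (T \<inter> unit_coords b c \<inter> unit_coords a b)" by blast
  also have "T \<inter> unit_coords b c \<inter> unit_coords a b = T \<inter> unit_coords a c"
    using unit_coords_split[OF assms(2,3)] by blast
  finally show ?thesis using restr_restr[OF incl] by (simp add: image_image)
qed

text \<open>All radii beyond d are shrunk to s', which is allowed on the unit part.\<close>
lemma unit_part_projection:
  assumes pos: "\<forall>i. 0 < \<rho> i" and one: "\<forall>i<d. \<rho> i = 1" and s': "1 < s'"
    and le: "\<forall>i\<in>{d..<N}. s' \<le> \<rho> i" and "d \<le> N"
    and I: "I \<subseteq> tate absv \<rho> {..<N}" and T: "semianalytic absv \<rho> N I T"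
  shows "oc_subanalytic absv (\<lambda>_. 1) d I (restr absv (\<lambda>_. 1) d ` (T \<inter> unit_coords d N))"
proof -
  define \<rho>' where "\<rho>' = (\<lambda>i. if i < d then 1 else s')"
  have ge_1: "\<forall>i. 1 \<le> \<rho>' i" and pos': "\<forall>i. 0 < \<rho>' i" using s' by (auto simp: \<rho>'_def)
  have le': "\<forall>i<N. \<rho>' i \<le> \<rho> i" using one le by (auto simp: \<rho>'_def)
  obtain T' where T': "semianalytic absv \<rho>' N I T'"
    and unit_part: "restr absv \<rho> N ` (T' \<inter> unit_coords 0 N) = T \<inter> unit_coords 0 N"
    using semianalytic_change_radius[OF pos ge_1 le' I T] by blast
  have incl: "tate absv (\<lambda>_. 1) {..<d} \<subseteq> tate absv \<rho> {..<N}"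
    by (rule tate_mono) (use one \<open>d \<le> N\<close> in auto)
  have "T \<inter> unit_coords d N = T \<inter> unit_coords 0 N"
    using spec_unit_coords_from[OF pos, of d N I] one semianalytic_subset T
    unfolding semianalytic_def by fastforce
  moreover have "T' \<inter> unit_coords d N = T' \<inter> unit_coords 0 N"
    using spec_unit_coords_from[OF pos', of d N I] semianalytic_subset T'
    unfolding semianalytic_def by (fastforce simp: \<rho>'_def)
  ultimately have "restr absv (\<lambda>_. 1) d ` (T \<inter> unit_coords d N) =
      restr absv (\<lambda>_. 1) d ` (T' \<inter> unit_coords d N)"
    using unit_part restr_restr[OF incl] by (metis (no_types, lifting) image_cong image_image)
  moreover have "(\<lambda>i. if i < d then (\<lambda>_. 1) i else s') = \<rho>'" by (simp add: \<rho>'_def)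
  ultimately show ?thesis
    unfolding oc_subanalytic_def unit_coords_def using s' T' \<open>d \<le> N\<close>
    by (intro exI[of _ "N - d"] exI[of _ s'] exI[of _ T']) simp
qed

lemma oc_projection_unit_part:
  assumes r: "\<forall>i<n. 1 < r i" and I: "I \<subseteq> tate absv (\<lambda>_. 1) {..<d}"
    and S: "oc_subanalytic absv (\<lambda>i. if i < d then 1 else r (i - d)) (d + n) I S"
  shows "oc_subanalytic absv (\<lambda>_. 1) d I (restr absv (\<lambda>_. 1) d ` (S \<inter> unit_coords d (d + n)))"
proof -
  define \<rho>\<^sub>0 where "\<rho>\<^sub>0 = (\<lambda>i. if i < d then 1 else r (i - d))"
  obtain m s T where s: "1 < s"
    and T: "semianalytic absv (\<lambda>i. if i < d + n then \<rho>\<^sub>0 i else s) (d + n + m) I T"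
    and S: "S = restr absv \<rho>\<^sub>0 (d + n) ` (T \<inter> unit_coords (d + n) (d + n + m))"
    using S unfolding oc_subanalytic_def unit_coords_def \<rho>\<^sub>0_def by blast
  obtain s' where s': "1 < s'" "s' \<le> s" "\<forall>i<n. s' \<le> r i" using common_lower_radius[OF s r] by blast
  let ?\<rho> = "\<lambda>i. if i < d + n then \<rho>\<^sub>0 i else s"
  have radii: "\<forall>i. 0 < ?\<rho> i" "\<forall>i<d. ?\<rho> i = 1" "\<forall>i\<in>{d..<d + n + m}. s' \<le> ?\<rho> i"
    using s s' r by (auto simp: \<rho>\<^sub>0_def intro: less_trans[OF zero_less_one])
  have "tate absv (\<lambda>_. 1) {..<d} \<subseteq> tate absv ?\<rho> {..<d + n + m}"
    by (rule tate_mono) (auto simp: \<rho>\<^sub>0_def)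
  hence I: "I \<subseteq> tate absv ?\<rho> {..<d + n + m}" using I by blast
  have "tate absv (\<lambda>_. 1) {..<d} \<subseteq> tate absv \<rho>\<^sub>0 {..<d + n}"
    by (rule tate_mono) (auto simp: \<rho>\<^sub>0_def)
  hence "restr absv (\<lambda>_. 1) d ` (S \<inter> unit_coords d (d + n)) =
      restr absv (\<lambda>_. 1) d ` (T \<inter> unit_coords d (d + n + m))"
    unfolding S by (rule restr_image_unit_coords) simp_all
  thus ?thesis using unit_part_projection[OF radii(1,2) s'(1) radii(3) _ I T] by simp
qed

end

theorem corollary1p38:
  fixes absv :: "'k::field \<Rightarrow> real"
    and d n :: nat
    and I :: "'k series set"
    and r :: "nat \<Rightarrow> real"
    and S :: "('k series \<Rightarrow> real) set"
  assumes "valued_field absv"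
    and "is_ideal (tate absv (\<lambda>_. 1) {..<d}) I"
    and "\<forall>i<n. r i > 1 \<and> in_sqrt_value_group absv (r i)"
    and "oc_subanalytic absv (\<lambda>i. if i < d then 1 else r (i - d)) (d + n) I S"
  shows "oc_subanalytic absv (\<lambda>_. 1) d I
           (restr absv (\<lambda>_. 1) d ` (S \<inter> {x. \<forall>j\<in>{d..<d+n}. x (ser_var j) \<le> 1}))"
proof -
  interpret ultrametric_abs absv using assms(1) by unfold_locales (simp add: valued_field_def)
  have "I \<subseteq> tate absv (\<lambda>_. 1) {..<d}" using assms(2) unfolding is_ideal_def by blast
  with assms(3,4) show ?thesis using oc_projection_unit_part unfolding unit_coords_def by blast
qed

end
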